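(* Let $n_1,\dots,n_p\ge0$, let $W=\mathcal{H}_{n_1}(\mathbb{R}^3)\oplus\dots\oplus\mathcal{H}_{n_p}(\mathbb{R}^3)$ as a real $\mathrm{SO}(3,\mathbb{R})$-representation, and let $W^{\mathbb{C}}=\mathcal{H}_{n_1}(\mathbb{C}^3)\oplus\dots\oplus\mathcal{H}_{n_p}(\mathbb{C}^3)$ be its complexification, a representation of $\mathrm{SO}(3,\mathbb{C})$. Let $\{J_1,\dots,J_N\}$ be a minimal integrity basis for the algebra $\mathbb{C}[W^{\mathbb{C}}]^{\mathrm{SO}(3,\mathbb{C})}$ such that each $J_k$ restricted to $W$ is a real polynomial, i.e. $J_k|_W\in\mathbb{R}[W]$. Then $\{J_1|_W,\dots,J_N|_W\}$ is a minimal integrity basis for the real invariant algebra $\mathbb{R}[W]^{\mathrm{SO}(3,\mathbb{R})}$.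
   Context: $\mathcal{H}_n(\mathbb{K}^3)$ is the space of harmonic (vanishing Laplacian) homogeneous polynomials of degree $n$ in three variables with coefficients in $\mathbb{K}$; the rotation groups act by $(g\cdot\mathbf{p})(\mathbf{v})=\mathbf{p}(g^{-1}\mathbf{v})$. An integrity basis of an invariant algebra is a finite set of homogeneous invariant polynomials generating it as an algebra; it is minimal if none of its elements is a polynomial in the others. *)

theory Defs
  imports "HOL-Analysis.Analysis"
begin

text \<open>Homogeneous harmonic polynomials of degree n in three variables, given by
  coefficient families c(a,b,e) of the monomial x^a y^b z^e.\<close>

definition harm_coeffs :: "nat \<Rightarrow> (nat \<times> nat \<times> nat \<Rightarrow> 'a::field) \<Rightarrow> bool" where
  "harm_coeffs n c \<longleftrightarrow>
     (\<forall>a b e. a + b + e \<noteq> n \<longrightarrow> c (a, b, e) = 0) \<and>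
     (\<forall>a b e. of_nat ((a + 2) * (a + 1)) * c (a + 2, b, e)
            + of_nat ((b + 2) * (b + 1)) * c (a, b + 2, e)
            + of_nat ((e + 2) * (e + 1)) * c (a, b, e + 2) = 0)"

definition hom_eval :: "nat \<Rightarrow> (nat \<times> nat \<times> nat \<Rightarrow> 'a::field) \<Rightarrow> 'a ^ 3 \<Rightarrow> 'a" where
  "hom_eval n c v = (\<Sum>a\<le>n. \<Sum>b\<le>n. \<Sum>e\<le>n.
       c (a, b, e) * (v $ 1) ^ a * (v $ 2) ^ b * (v $ 3) ^ e)"

definition Harm :: "nat \<Rightarrow> ('a::field ^ 3 \<Rightarrow> 'a) set" where
  "Harm n = {f. \<exists>c. harm_coeffs n c \<and> f = hom_eval n c}"

text \<open>The direct sum W = H_{n_1} + ... + H_{n_p} for ns = [n_1,...,n_p];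
  an element is a family of components indexed by i < p (zero beyond).\<close>
definition Wsp :: "nat list \<Rightarrow> (nat \<Rightarrow> 'a::field ^ 3 \<Rightarrow> 'a) set" where
  "Wsp ns = {w. (\<forall>i < length ns. w i \<in> Harm (ns ! i)) \<and> (\<forall>i \<ge> length ns. w i = (\<lambda>_. 0))}"

definition wscale :: "'a::field \<Rightarrow> (nat \<Rightarrow> 'a ^ 3 \<Rightarrow> 'a) \<Rightarrow> (nat \<Rightarrow> 'a ^ 3 \<Rightarrow> 'a)" where
  "wscale t w = (\<lambda>i v. t * w i v)"

definition wadd :: "(nat \<Rightarrow> 'a::field ^ 3 \<Rightarrow> 'a) \<Rightarrow> (nat \<Rightarrow> 'a ^ 3 \<Rightarrow> 'a) \<Rightarrow> (nat \<Rightarrow> 'a ^ 3 \<Rightarrow> 'a)" where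
  "wadd w u = (\<lambda>i v. w i v + u i v)"

definition SO3 :: "('a::field ^ 3 ^ 3) set" where
  "SO3 = {g. transpose g ** g = mat 1 \<and> det g = 1}"

definition wact :: "'a::field ^ 3 ^ 3 \<Rightarrow> (nat \<Rightarrow> 'a ^ 3 \<Rightarrow> 'a) \<Rightarrow> (nat \<Rightarrow> 'a ^ 3 \<Rightarrow> 'a)" where
  "wact g w = (\<lambda>i v. w i (matrix_inv g *v v))"

text \<open>Polynomial functions on a vector space V (given as a carrier): the algebra
  generated by constants and linear functionals on V.\<close>
definition lin_on :: "'w set \<Rightarrow> ('a::field \<Rightarrow> 'w \<Rightarrow> 'w) \<Rightarrow> ('w \<Rightarrow> 'w \<Rightarrow> 'w) \<Rightarrow> ('w \<Rightarrow> 'a) \<Rightarrow> bool" where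
  "lin_on V sc ad l \<longleftrightarrow> (\<forall>x\<in>V. \<forall>y\<in>V. \<forall>a b. l (ad (sc a x) (sc b y)) = a * l x + b * l y)"

inductive_set polyfuns :: "'w set \<Rightarrow> ('a::field \<Rightarrow> 'w \<Rightarrow> 'w) \<Rightarrow> ('w \<Rightarrow> 'w \<Rightarrow> 'w) \<Rightarrow> ('w \<Rightarrow> 'a) set"
  for V sc ad where
  pf_const: "(\<lambda>_. c) \<in> polyfuns V sc ad"
| pf_lin: "lin_on V sc ad l \<Longrightarrow> l \<in> polyfuns V sc ad"
| pf_add: "f \<in> polyfuns V sc ad \<Longrightarrow> g \<in> polyfuns V sc ad \<Longrightarrow> (\<lambda>x. f x + g x) \<in> polyfuns V sc ad"
| pf_mult: "f \<in> polyfuns V sc ad \<Longrightarrow> g \<in> polyfuns V sc ad \<Longrightarrow> (\<lambda>x. f x * g x) \<in> polyfuns V sc ad"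

inductive_set alg_gen :: "('w \<Rightarrow> 'a::comm_ring_1) set \<Rightarrow> ('w \<Rightarrow> 'a) set" for S where
  ag_const: "(\<lambda>_. c) \<in> alg_gen S"
| ag_gen: "f \<in> S \<Longrightarrow> f \<in> alg_gen S"
| ag_add: "f \<in> alg_gen S \<Longrightarrow> g \<in> alg_gen S \<Longrightarrow> (\<lambda>x. f x + g x) \<in> alg_gen S"
| ag_mult: "f \<in> alg_gen S \<Longrightarrow> g \<in> alg_gen S \<Longrightarrow> (\<lambda>x. f x * g x) \<in> alg_gen S"

text \<open>Everything is considered as functions on the carrier W only.\<close>
definition in_on :: "'w set \<Rightarrow> ('w \<Rightarrow> 'a) \<Rightarrow> ('w \<Rightarrow> 'a) set \<Rightarrow> bool" where
  "in_on V F A \<longleftrightarrow> (\<exists>G\<in>A. \<forall>w\<in>V. F w = G w)"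

definition poly_W :: "nat list \<Rightarrow> ((nat \<Rightarrow> 'a::field ^ 3 \<Rightarrow> 'a) \<Rightarrow> 'a) \<Rightarrow> bool" where
  "poly_W ns F \<longleftrightarrow> in_on (Wsp ns) F (polyfuns (Wsp ns) wscale wadd)"

definition inv_W :: "nat list \<Rightarrow> ((nat \<Rightarrow> 'a::field ^ 3 \<Rightarrow> 'a) \<Rightarrow> 'a) \<Rightarrow> bool" where
  "inv_W ns F \<longleftrightarrow> poly_W ns F \<and> (\<forall>g\<in>SO3. \<forall>w\<in>Wsp ns. F (wact g w) = F w)"

definition homog_W :: "nat list \<Rightarrow> ((nat \<Rightarrow> 'a::field ^ 3 \<Rightarrow> 'a) \<Rightarrow> 'a) \<Rightarrow> bool" where
  "homog_W ns F \<longleftrightarrow> (\<exists>d::nat. \<forall>t. \<forall>w\<in>Wsp ns. F (wscale t w) = t ^ d * F w)"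

definition integrity_basis :: "nat list \<Rightarrow> nat \<Rightarrow> (nat \<Rightarrow> (nat \<Rightarrow> 'a::field ^ 3 \<Rightarrow> 'a) \<Rightarrow> 'a) \<Rightarrow> bool" where
  "integrity_basis ns N J \<longleftrightarrow>
     (\<forall>k<N. inv_W ns (J k) \<and> homog_W ns (J k)) \<and>
     (\<forall>F. inv_W ns F \<longrightarrow> in_on (Wsp ns) F (alg_gen (J ` {..<N})))"

definition minimal_integrity_basis :: "nat list \<Rightarrow> nat \<Rightarrow> (nat \<Rightarrow> (nat \<Rightarrow> 'a::field ^ 3 \<Rightarrow> 'a) \<Rightarrow> 'a) \<Rightarrow> bool" where
  "minimal_integrity_basis ns N J \<longleftrightarrow> integrity_basis ns N J \<and>
     (\<forall>k<N. \<not> in_on (Wsp ns) (J k) (alg_gen (J ` ({..<N} - {k}))))"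

text \<open>Complexification H_n(R^3) \<rightarrow> H_n(C^3): the harmonic complex polynomial with
  the same (real) coefficients, i.e. extending f.\<close>
definition complexify_H :: "nat \<Rightarrow> (real ^ 3 \<Rightarrow> real) \<Rightarrow> (complex ^ 3 \<Rightarrow> complex)" where
  "complexify_H n f = (THE h. h \<in> Harm n \<and> (\<forall>v. h (\<chi> j. complex_of_real (v $ j)) = complex_of_real (f v)))"

definition complexify_W :: "nat list \<Rightarrow> (nat \<Rightarrow> real ^ 3 \<Rightarrow> real) \<Rightarrow> (nat \<Rightarrow> complex ^ 3 \<Rightarrow> complex)" where
  "complexify_W ns w = (\<lambda>i. if i < length ns then complexify_H (ns ! i) (w i) else (\<lambda>_. 0))"

end

theory Submission
  imports Defs
begin

text \<open>Complexification of harmonic polynomials commutes with real rotations (\<open>H\<^sub>n\<close> is preserved by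
  orthogonal substitutions, since the Laplacian is), so the \<open>J\<^sub>k|\<^sub>W\<close> are homogeneous real invariants.

  Conversely, a real invariant \<open>F\<close> extends to a complex polynomial function \<open>H\<close> on \<open>W\<^sup>\<complex>\<close>.
  Since \<open>W\<close> is Zariski dense in \<open>W\<^sup>\<complex>\<close>, \<open>H\<close> is invariant under \<open>SO(3,\<real>)\<close>. Every complex
  rotation is a product of rotations about the \<open>x\<close>- and \<open>z\<close>-axes, and such rotations form Laurent
  curves \<open>u \<mapsto> g(u)\<close>, \<open>u = c + i s\<close>, which are real on the unit circle; so \<open>u \<mapsto> H (g(u) x) - H x\<close>
  is a Laurent polynomial vanishing on the circle, hence zero, and \<open>H\<close> is invariant under
  \<open>SO(3,\<complex>)\<close>. Writing \<open>H\<close> as a polynomial in the \<open>J\<^sub>k\<close> and taking real parts on \<open>W\<close> writes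
  \<open>F\<close> as a polynomial in the \<open>J\<^sub>k|\<^sub>W\<close>. Minimality transfers because an expression of \<open>J\<^sub>k|\<^sub>W\<close>
  through the others lifts to the same expression of \<open>J\<^sub>k\<close> on \<open>W\<close>, hence on \<open>W\<^sup>\<complex>\<close> by density.\<close>

section \<open>Polynomial functions on \<open>K\<^sup>3\<close>\<close>

inductive_set polyfun3 :: "('a::field ^ 3 \<Rightarrow> 'a) set" where
  polyfun3_const: "(\<lambda>_. c) \<in> polyfun3"
| polyfun3_coord: "(\<lambda>v. v $ k) \<in> polyfun3"
| polyfun3_add: "f \<in> polyfun3 \<Longrightarrow> g \<in> polyfun3 \<Longrightarrow> (\<lambda>v. f v + g v) \<in> polyfun3"
| polyfun3_mult: "f \<in> polyfun3 \<Longrightarrow> g \<in> polyfun3 \<Longrightarrow> (\<lambda>v. f v * g v) \<in> polyfun3"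

lemma polyfun3_sum:
  "finite A \<Longrightarrow> (\<And>i. i \<in> A \<Longrightarrow> f i \<in> polyfun3) \<Longrightarrow> (\<lambda>v. \<Sum>i\<in>A. f i v) \<in> polyfun3"
  by (induction A rule: finite_induct) (auto intro: polyfun3.intros polyfun3_const[of 0, simplified])

lemma polyfun3_power: "f \<in> polyfun3 \<Longrightarrow> (\<lambda>v. f v ^ n) \<in> polyfun3"
  by (induction n) (auto intro: polyfun3.intros polyfun3_const[of 1, simplified])

lemma hom_eval_polyfun3: "hom_eval N c \<in> polyfun3"
  unfolding hom_eval_def[abs_def]
  by (intro polyfun3_sum polyfun3_mult polyfun3_power polyfun3_const polyfun3_coord) auto

lemma polyfun3_compose_linear:
  fixes A :: "'a::field^3^3"
  shows "f \<in> polyfun3 \<Longrightarrow> (\<lambda>v. f (A *v v)) \<in> polyfun3"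
proof (induction rule: polyfun3.induct)
  case (polyfun3_coord k)
  have "(\<lambda>v. \<Sum>j\<in>UNIV. A$k$j * v$j) \<in> polyfun3"
    by (intro polyfun3_sum polyfun3.polyfun3_mult polyfun3.polyfun3_const polyfun3.polyfun3_coord) auto
  then show ?case by (simp add: matrix_vector_mult_def)
qed (auto intro: polyfun3.intros)

lemma polyfun3_on_line: "f \<in> polyfun3 \<Longrightarrow> \<exists>p. \<forall>t. f (v + t *s w) = poly p t"
proof (induction rule: polyfun3.induct)
  case (polyfun3_const c) show ?case by (rule exI[of _ "[:c:]"]) simp
next
  case (polyfun3_coord k) show ?case by (rule exI[of _ "[:v$k, w$k:]"]) (simp add: algebra_simps)
next
  case (polyfun3_add f g) then show ?case by (metis poly_add)
next
  case (polyfun3_mult f g) then show ?case by (metis poly_mult)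
qed

text \<open>Derivatives are taken algebraically: over a field of characteristic 0 the restriction of a
  polynomial function to the line \<open>t \<mapsto> v + t w\<close> is a unique polynomial in \<open>t\<close>, and its linear
  coefficient is the derivative at \<open>v\<close> in direction \<open>w\<close>.\<close>

definition line_poly :: "('a::field_char_0 ^ 3 \<Rightarrow> 'a) \<Rightarrow> 'a^3 \<Rightarrow> 'a^3 \<Rightarrow> 'a poly" where
  "line_poly f v w = (THE p. \<forall>t. f (v + t *s w) = poly p t)"

definition dderiv :: "('a::field_char_0 ^ 3 \<Rightarrow> 'a) \<Rightarrow> 'a^3 \<Rightarrow> 'a^3 \<Rightarrow> 'a" where
  "dderiv f v w = coeff (line_poly f v w) 1"

lemma line_poly_eqI: "\<forall>t. f (v + t *s w) = poly p t \<Longrightarrow> line_poly f v w = p"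
  unfolding line_poly_def
  by (rule the_equality) (auto simp: poly_eq_poly_eq_iff[symmetric] fun_eq_iff)

lemma poly_line_poly: "f \<in> polyfun3 \<Longrightarrow> poly (line_poly f v w) t = f (v + t *s w)"
  using polyfun3_on_line line_poly_eqI by metis

lemma coeff_0_line_poly: "f \<in> polyfun3 \<Longrightarrow> coeff (line_poly f v w) 0 = f v"
  using poly_line_poly[of f v w 0] by (simp add: poly_0_coeff_0)

lemma line_poly_add:
  "f \<in> polyfun3 \<Longrightarrow> g \<in> polyfun3 \<Longrightarrow> line_poly (\<lambda>v. f v + g v) v w = line_poly f v w + line_poly g v w"
  by (rule line_poly_eqI) (simp add: poly_line_poly)

lemma line_poly_mult:
  "f \<in> polyfun3 \<Longrightarrow> g \<in> polyfun3 \<Longrightarrow> line_poly (\<lambda>v. f v * g v) v w = line_poly f v w * line_poly g v w"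
  by (rule line_poly_eqI) (simp add: poly_line_poly)

lemma dderiv_const [simp]: "dderiv (\<lambda>v. c) v w = 0"
  by (simp add: dderiv_def line_poly_eqI[of _ _ _ "[:c:]"])

lemma dderiv_coord [simp]: "dderiv (\<lambda>v. v$k) v w = w$k"
  by (simp add: dderiv_def line_poly_eqI[of _ _ _ "[:v$k, w$k:]"] algebra_simps)

lemma dderiv_add:
  "f \<in> polyfun3 \<Longrightarrow> g \<in> polyfun3 \<Longrightarrow> dderiv (\<lambda>v. f v + g v) v w = dderiv f v w + dderiv g v w"
  by (simp add: dderiv_def line_poly_add)

lemma dderiv_mult:
  assumes "f \<in> polyfun3" "g \<in> polyfun3"
  shows "dderiv (\<lambda>v. f v * g v) v w = dderiv f v w * g v + f v * dderiv g v w"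
proof -
  have "coeff (p * q) 1 = coeff p 0 * coeff q 1 + coeff p 1 * coeff q 0" for p q :: "'a poly"
    by (simp add: coeff_mult)
  then show ?thesis
    using assms by (simp add: dderiv_def line_poly_mult coeff_0_line_poly mult_ac)
qed

lemma dderiv_cmult: "f \<in> polyfun3 \<Longrightarrow> dderiv (\<lambda>v. c * f v) v w = c * dderiv f v w"
  using dderiv_mult[OF polyfun3_const[of c], of f] by simp

lemma dderiv_sum:
  assumes "finite A" "\<And>i. i \<in> A \<Longrightarrow> f i \<in> polyfun3"
  shows "dderiv (\<lambda>v. \<Sum>i\<in>A. f i v) u w = (\<Sum>i\<in>A. dderiv (f i) u w)"
  using assms
proof (induction A rule: finite_induct)
  case (insert x F)
  then show ?case by (simp add: dderiv_add polyfun3_sum)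
qed simp

lemma dderiv_polyfun3: "f \<in> polyfun3 \<Longrightarrow> (\<lambda>u. dderiv f u w) \<in> polyfun3"
  by (induction rule: polyfun3.induct) (auto simp: dderiv_add dderiv_mult intro: polyfun3.intros)

lemma dderiv_axis_expansion:
  "f \<in> polyfun3 \<Longrightarrow> dderiv f v w = (\<Sum>k\<in>UNIV. w$k * dderiv f v (axis k 1))"
proof (induction rule: polyfun3.induct)
  case (polyfun3_coord j)
  have "(\<Sum>k\<in>UNIV. w$k * (axis k 1 :: 'a^3) $ j) = (\<Sum>k\<in>UNIV. if k = j then w$k else 0)"
    by (rule sum.cong) (auto simp: axis_def)
  then show ?case by simp
next
  case (polyfun3_add f g) then show ?case by (simp add: dderiv_add sum.distrib algebra_simps)
next
  case (polyfun3_mult f g) then show ?case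
    by (simp add: dderiv_mult sum.distrib algebra_simps sum_distrib_left sum_distrib_right)
qed simp

lemma dderiv_compose_linear:
  fixes A :: "'a::field_char_0^3^3"
  assumes "f \<in> polyfun3"
  shows "dderiv (\<lambda>v. f (A *v v)) u w = dderiv f (A *v u) (A *v w)"
proof -
  have "line_poly (\<lambda>v. f (A *v v)) u w = line_poly f (A *v u) (A *v w)"
    by (rule line_poly_eqI)
      (simp add: poly_line_poly[OF assms] matrix_vector_right_distrib vector_scalar_commute)
  then show ?thesis by (simp add: dderiv_def)
qed

lemma matrix_vector_mult_axis_nth:
  fixes A :: "'a::semiring_1^'n^'m"
  shows "(A *v axis j 1) $ k = A$k$j"
  by (simp add: matrix_vector_mult_def axis_def if_distrib cong: if_cong)

lemma dderiv_compose_linear_axis: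
  fixes A :: "'a::field_char_0^3^3"
  assumes "f \<in> polyfun3"
  shows "dderiv (\<lambda>v. f (A *v v)) u (axis j 1) = (\<Sum>k\<in>UNIV. A$k$j * dderiv f (A *v u) (axis k 1))"
  unfolding dderiv_compose_linear[OF assms]
  by (subst dderiv_axis_expansion[OF assms]) (simp add: matrix_vector_mult_axis_nth)

definition monomial3 :: "nat \<Rightarrow> nat \<Rightarrow> nat \<Rightarrow> 'a::field ^3 \<Rightarrow> 'a" where
  "monomial3 a b e v = v$1^a * v$2^b * v$3^e"

definition coeffs_in_box :: "nat \<Rightarrow> (nat \<times> nat \<times> nat \<Rightarrow> 'a::zero) \<Rightarrow> bool" where
  "coeffs_in_box N c \<longleftrightarrow> (\<forall>a b e. c (a,b,e) \<noteq> 0 \<longrightarrow> a \<le> N \<and> b \<le> N \<and> e \<le> N)"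

lemma coeffs_in_box_outside: "coeffs_in_box N c \<Longrightarrow> N < a \<or> N < b \<or> N < e \<Longrightarrow> c(a,b,e) = 0"
  unfolding coeffs_in_box_def by force

lemma monomial3_polyfun3: "monomial3 a b e \<in> polyfun3"
  unfolding monomial3_def[abs_def] by (auto intro!: polyfun3.intros polyfun3_power)

lemma hom_eval_monomial3: "hom_eval N c = (\<lambda>v. \<Sum>a\<le>N. \<Sum>b\<le>N. \<Sum>e\<le>N. c(a,b,e) * monomial3 a b e v)"
  by (simp add: hom_eval_def[abs_def] monomial3_def mult_ac)

lemma dderiv_coord_power: "dderiv (\<lambda>v. v$j ^ a) u w = of_nat a * u$j^(a - 1) * w$j"
proof (induction a)
  case (Suc a)
  have "dderiv (\<lambda>v. v$j * v$j ^ a) u w = w$j * u$j^a + u$j * dderiv (\<lambda>v. v$j ^ a) u w"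
    by (subst dderiv_mult) (auto intro: polyfun3_power polyfun3.intros)
  with Suc show ?case by (cases a) (auto simp: algebra_simps)
qed simp

lemma dderiv_monomial3:
  "dderiv (monomial3 a b e) u w =
     of_nat a * u$1^(a-1) * u$2^b * u$3^e * w$1 + of_nat b * u$1^a * u$2^(b-1) * u$3^e * w$2
     + of_nat e * u$1^a * u$2^b * u$3^(e-1) * w$3"
proof -
  have "dderiv (monomial3 a b e) u w
      = dderiv (\<lambda>v. v$1^a * v$2^b) u w * u$3^e + (u$1^a * u$2^b) * dderiv (\<lambda>v. v$3^e) u w"
    unfolding monomial3_def[abs_def]
    by (rule dderiv_mult) (auto intro!: polyfun3.intros polyfun3_power)
  also have "dderiv (\<lambda>v. v$1^a * v$2^b) u w
      = dderiv (\<lambda>v. v$1^a) u w * u$2^b + u$1^a * dderiv (\<lambda>v. v$2^b) u w"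
    by (rule dderiv_mult) (auto intro: polyfun3_power polyfun3.intros)
  finally show ?thesis by (simp add: dderiv_coord_power algebra_simps)
qed

lemma dderiv_hom_eval:
  "dderiv (hom_eval N c) u w = (\<Sum>a\<le>N. \<Sum>b\<le>N. \<Sum>e\<le>N. c(a,b,e) * dderiv (monomial3 a b e) u w)"
  unfolding hom_eval_monomial3
  by (simp add: dderiv_sum dderiv_cmult polyfun3_sum polyfun3.intros monomial3_polyfun3)

lemma sum_atMost_derivative_shift:
  fixes G :: "nat \<Rightarrow> 'a::field"
  assumes "G (Suc N) = 0"
  shows "(\<Sum>a\<le>N. of_nat a * x^(a-1) * G a) = (\<Sum>a\<le>N. of_nat (a+1) * x^a * G (a+1))"
proof -
  have "(\<Sum>a\<le>M. of_nat a * x^(a-1) * G a) = (\<Sum>a<M. of_nat (a+1) * x^a * G (a+1))" for M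
    by (induction M) (simp_all add: atMost_Suc lessThan_Suc add.commute)
  then show ?thesis using assms by (simp add: lessThan_Suc_atMost[symmetric])
qed

definition dx_coeffs :: "(nat \<times> nat \<times> nat \<Rightarrow> 'a::field) \<Rightarrow> nat \<times> nat \<times> nat \<Rightarrow> 'a" where
  "dx_coeffs c = (\<lambda>(a,b,e). of_nat (a+1) * c (a+1,b,e))"

definition dy_coeffs :: "(nat \<times> nat \<times> nat \<Rightarrow> 'a::field) \<Rightarrow> nat \<times> nat \<times> nat \<Rightarrow> 'a" where
  "dy_coeffs c = (\<lambda>(a,b,e). of_nat (b+1) * c (a,b+1,e))"

definition dz_coeffs :: "(nat \<times> nat \<times> nat \<Rightarrow> 'a::field) \<Rightarrow> nat \<times> nat \<times> nat \<Rightarrow> 'a" where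
  "dz_coeffs c = (\<lambda>(a,b,e). of_nat (e+1) * c (a,b,e+1))"

lemma coeffs_in_box_partials:
  "coeffs_in_box N c \<Longrightarrow>
     coeffs_in_box N (dx_coeffs c) \<and> coeffs_in_box N (dy_coeffs c) \<and> coeffs_in_box N (dz_coeffs c)"
  unfolding coeffs_in_box_def dx_coeffs_def dy_coeffs_def dz_coeffs_def by fastforce

lemma dderiv_x_hom_eval:
  assumes "coeffs_in_box N c"
  shows "dderiv (hom_eval N c) u (axis 1 1) = hom_eval N (dx_coeffs c) u"
proof -
  have "dderiv (hom_eval N c) u (axis 1 1) =
     (\<Sum>a\<le>N. of_nat a * u$1^(a-1) * (\<Sum>b\<le>N. \<Sum>e\<le>N. c(a,b,e) * u$2^b * u$3^e))"
    by (simp add: dderiv_hom_eval dderiv_monomial3 axis_def sum_distrib_left mult_ac)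
  also have "\<dots> = (\<Sum>a\<le>N. of_nat (a+1) * u$1^a * (\<Sum>b\<le>N. \<Sum>e\<le>N. c(a+1,b,e) * u$2^b * u$3^e))"
    by (rule sum_atMost_derivative_shift) (simp add: coeffs_in_box_outside[OF assms])
  finally show ?thesis
    by (simp add: hom_eval_def dx_coeffs_def sum_distrib_left mult_ac)
qed

lemma dderiv_y_hom_eval:
  assumes "coeffs_in_box N c"
  shows "dderiv (hom_eval N c) u (axis 2 1) = hom_eval N (dy_coeffs c) u"
proof -
  have "dderiv (hom_eval N c) u (axis 2 1) =
     (\<Sum>a\<le>N. u$1^a * (\<Sum>b\<le>N. of_nat b * u$2^(b-1) * (\<Sum>e\<le>N. c(a,b,e) * u$3^e)))"
    by (simp add: dderiv_hom_eval dderiv_monomial3 axis_def sum_distrib_left mult_ac)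
  also have "\<dots> = (\<Sum>a\<le>N. u$1^a * (\<Sum>b\<le>N. of_nat (b+1) * u$2^b * (\<Sum>e\<le>N. c(a,b+1,e) * u$3^e)))"
    by (intro sum.cong refl arg_cong2[where f = times] sum_atMost_derivative_shift)
      (simp add: coeffs_in_box_outside[OF assms])
  finally show ?thesis
    by (simp add: hom_eval_def dy_coeffs_def sum_distrib_left mult_ac)
qed

lemma dderiv_z_hom_eval:
  assumes "coeffs_in_box N c"
  shows "dderiv (hom_eval N c) u (axis 3 1) = hom_eval N (dz_coeffs c) u"
proof -
  have "dderiv (hom_eval N c) u (axis 3 1) =
     (\<Sum>a\<le>N. u$1^a * (\<Sum>b\<le>N. u$2^b * (\<Sum>e\<le>N. of_nat e * u$3^(e-1) * c(a,b,e))))"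
    by (simp add: dderiv_hom_eval dderiv_monomial3 axis_def sum_distrib_left mult_ac)
  also have "\<dots> = (\<Sum>a\<le>N. u$1^a * (\<Sum>b\<le>N. u$2^b * (\<Sum>e\<le>N. of_nat (e+1) * u$3^e * c(a,b,e+1))))"
    by (intro sum.cong refl arg_cong2[where f = times] sum_atMost_derivative_shift)
      (simp add: coeffs_in_box_outside[OF assms])
  finally show ?thesis
    by (simp add: hom_eval_def dz_coeffs_def sum_distrib_left mult_ac)
qed

definition laplacian :: "('a::field_char_0 ^ 3 \<Rightarrow> 'a) \<Rightarrow> 'a^3 \<Rightarrow> 'a" where
  "laplacian f u = (\<Sum>k\<in>UNIV. dderiv (\<lambda>u. dderiv f u (axis k 1)) u (axis k 1))"

definition laplacian_coeffs :: "(nat \<times> nat \<times> nat \<Rightarrow> 'a::field) \<Rightarrow> nat \<times> nat \<times> nat \<Rightarrow> 'a" where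
  "laplacian_coeffs c = (\<lambda>(a,b,e). of_nat ((a + 2) * (a + 1)) * c (a + 2, b, e)
            + of_nat ((b + 2) * (b + 1)) * c (a, b + 2, e)
            + of_nat ((e + 2) * (e + 1)) * c (a, b, e + 2))"

lemma harm_coeffs_iff:
  "harm_coeffs n c \<longleftrightarrow> (\<forall>a b e. a + b + e \<noteq> n \<longrightarrow> c (a, b, e) = 0) \<and> laplacian_coeffs c = (\<lambda>_. 0)"
  by (auto simp: harm_coeffs_def laplacian_coeffs_def fun_eq_iff)

lemma laplacian_hom_eval:
  assumes "coeffs_in_box N c"
  shows "laplacian (hom_eval N c) u = hom_eval N (laplacian_coeffs c) u"
proof -
  have box: "coeffs_in_box N (dx_coeffs c)" "coeffs_in_box N (dy_coeffs c)" "coeffs_in_box N (dz_coeffs c)"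
    using coeffs_in_box_partials[OF assms] by auto
  have "laplacian (hom_eval N c) u
      = hom_eval N (dx_coeffs (dx_coeffs c)) u + hom_eval N (dy_coeffs (dy_coeffs c)) u
        + hom_eval N (dz_coeffs (dz_coeffs c)) u"
    unfolding laplacian_def sum_3
    by (simp add: dderiv_x_hom_eval[OF assms] dderiv_y_hom_eval[OF assms] dderiv_z_hom_eval[OF assms]
        dderiv_x_hom_eval[OF box(1)] dderiv_y_hom_eval[OF box(2)] dderiv_z_hom_eval[OF box(3)])
  also have "\<dots> = hom_eval N (laplacian_coeffs c) u"
    unfolding hom_eval_def sum.distrib[symmetric] distrib_right[symmetric]
    by (intro sum.cong refl)
      (simp add: dx_coeffs_def dy_coeffs_def dz_coeffs_def laplacian_coeffs_def algebra_simps)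
  finally show ?thesis .
qed

lemma laplacian_compose_orthogonal:
  fixes A :: "'a::field_char_0^3^3"
  assumes f: "f \<in> polyfun3" and A: "A ** transpose A = mat 1"
  shows "laplacian (\<lambda>v. f (A *v v)) u = laplacian f (A *v u)"
proof -
  define g where "g k = (\<lambda>u. dderiv f u (axis k 1))" for k
  have g: "g k \<in> polyfun3" for k
    unfolding g_def by (rule dderiv_polyfun3[OF f])
  define X where "X k l = dderiv (g k) (A *v u) (axis l 1)" for k l
  have orth: "(\<Sum>j\<in>UNIV. A$k$j * A$l$j) * x = (if k = l then x else 0)" for k l x
    using arg_cong[OF A, of "\<lambda>M. M$k$l"] by (simp add: matrix_matrix_mult_def mat_def transpose_def)
  have "laplacian (\<lambda>v. f (A *v v)) u
      = (\<Sum>j\<in>UNIV. dderiv (\<lambda>u. \<Sum>k\<in>UNIV. A$k$j * g k (A *v u)) u (axis j 1))"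
    by (simp add: laplacian_def dderiv_compose_linear_axis[OF f] g_def)
  also have "\<dots> = (\<Sum>j\<in>UNIV. \<Sum>k\<in>UNIV. \<Sum>l\<in>UNIV. A$k$j * A$l$j * X k l)"
    by (simp add: dderiv_sum dderiv_cmult dderiv_compose_linear_axis g polyfun3_compose_linear
        polyfun3.intros X_def sum_distrib_left mult.assoc)
  also have "\<dots> = (\<Sum>k\<in>UNIV. \<Sum>l\<in>UNIV. (\<Sum>j\<in>UNIV. A$k$j * A$l$j) * X k l)"
    by (subst sum.swap, rule sum.cong[OF refl], subst sum.swap) (simp add: sum_distrib_right)
  also have "\<dots> = (\<Sum>k\<in>UNIV. X k k)"
    by (simp add: orth)
  finally show ?thesis by (simp add: laplacian_def X_def g_def)
qed

text \<open>Lists of terms \<open>(r, (a, b, e))\<close> standing for \<open>r x\<^sup>a y\<^sup>b z\<^sup>e\<close>; exponents may repeat, and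
  \<open>terms_coeffs\<close> collects them into a coefficient function.\<close>

definition terms_eval :: "('a::field \<times> (nat \<times> nat \<times> nat)) list \<Rightarrow> 'a^3 \<Rightarrow> 'a" where
  "terms_eval L v = sum_list (map (\<lambda>(r,(a,b,e)). r * monomial3 a b e v) L)"

definition terms_mult ::
  "('a::field \<times> (nat \<times> nat \<times> nat)) list \<Rightarrow> ('a \<times> (nat \<times> nat \<times> nat)) list \<Rightarrow> ('a \<times> (nat \<times> nat \<times> nat)) list"
where
  "terms_mult L1 L2 =
     concat (map (\<lambda>(r,(a,b,e)). map (\<lambda>(r',(a',b',e')). (r*r', (a+a',b+b',e+e'))) L2) L1)"

definition terms_coeffs :: "('a::field \<times> (nat \<times> nat \<times> nat)) list \<Rightarrow> nat \<times> nat \<times> nat \<Rightarrow> 'a" where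
  "terms_coeffs L x = sum_list (map (\<lambda>(r,y). if y = x then r else 0) L)"

lemma terms_eval_append: "terms_eval (L1 @ L2) v = terms_eval L1 v + terms_eval L2 v"
  by (simp add: terms_eval_def)

lemma terms_eval_mult: "terms_eval (terms_mult L1 L2) v = terms_eval L1 v * terms_eval L2 v"
proof (induction L1)
  case Nil then show ?case by (simp add: terms_eval_def terms_mult_def)
next
  case (Cons x L1)
  obtain r a b e where x: "x = (r,(a,b,e))" by (cases x) auto
  have "terms_eval (map (\<lambda>(r',(a',b',e')). (r*r', (a+a',b+b',e+e'))) L2) v
      = r * monomial3 a b e v * terms_eval L2 v"
    by (induction L2) (auto simp: terms_eval_def monomial3_def power_add algebra_simps)
  then show ?case
    using Cons by (simp add: terms_mult_def x terms_eval_append[symmetric]) (simp add: terms_eval_def algebra_simps)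
qed

lemma polyfun3_terms_eval: "f \<in> polyfun3 \<Longrightarrow> \<exists>L. f = terms_eval L"
proof (induction rule: polyfun3.induct)
  case (polyfun3_const c)
  show ?case by (intro exI[of _ "[(c,(0,0,0))]"]) (simp add: terms_eval_def monomial3_def fun_eq_iff)
next
  case (polyfun3_coord k)
  consider "k = 1" | "k = 2" | "k = 3" using exhaust_3 by blast
  then show ?case
  proof cases
    case 1 show ?thesis by (intro exI[of _ "[(1,(1,0,0))]"]) (simp add: 1 terms_eval_def monomial3_def)
  next
    case 2 show ?thesis by (intro exI[of _ "[(1,(0,1,0))]"]) (simp add: 2 terms_eval_def monomial3_def)
  next
    case 3 show ?thesis by (intro exI[of _ "[(1,(0,0,1))]"]) (simp add: 3 terms_eval_def monomial3_def)
  qed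
next
  case (polyfun3_add f g)
  then obtain L1 L2 where "f = terms_eval L1" "g = terms_eval L2" by blast
  then show ?case by (intro exI[of _ "L1 @ L2"]) (simp add: terms_eval_append fun_eq_iff)
next
  case (polyfun3_mult f g)
  then obtain L1 L2 where "f = terms_eval L1" "g = terms_eval L2" by blast
  then show ?case by (intro exI[of _ "terms_mult L1 L2"]) (simp add: terms_eval_mult fun_eq_iff)
qed

lemma hom_eval_lin:
  "hom_eval n (\<lambda>x. a * c x + b * d x) v = a * hom_eval n c v + b * hom_eval n d v"
  by (simp add: hom_eval_def sum.distrib sum_distrib_left algebra_simps)

lemma hom_eval_add: "hom_eval n (\<lambda>x. c x + d x) v = hom_eval n c v + hom_eval n d v"
  using hom_eval_lin[of n 1 c 1 d v] by simp

lemma hom_eval_single: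
  assumes "a \<le> N" "b \<le> N" "e \<le> N"
  shows "hom_eval N (\<lambda>x. if x = (a,b,e) then r else 0) v = r * monomial3 a b e v"
proof -
  define m where "m a' b' e' = (v $ 1) ^ a' * (v $ 2) ^ b' * (v $ 3) ^ e'" for a' b' e'
  have "hom_eval N (\<lambda>x. if x = (a,b,e) then r else 0) v =
     (\<Sum>a'\<le>N. \<Sum>b'\<le>N. \<Sum>e'\<le>N. if e' = e then (if a' = a \<and> b' = b then r * m a' b' e' else 0) else 0)"
    unfolding hom_eval_def m_def by (intro sum.cong refl) auto
  also have "\<dots> = (\<Sum>a'\<le>N. \<Sum>b'\<le>N. if b' = b then (if a' = a then r * m a' b' e else 0) else 0)"
    using assms by (intro sum.cong refl) simp
  also have "\<dots> = r * m a b e"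
    using assms by simp
  finally show ?thesis by (simp add: m_def monomial3_def)
qed

lemma terms_eval_hom_eval:
  assumes "\<forall>(r,(a,b,e))\<in>set L. a \<le> N \<and> b \<le> N \<and> e \<le> N"
  shows "terms_eval L v = hom_eval N (terms_coeffs L) v"
  using assms
proof (induction L)
  case Nil then show ?case by (simp add: terms_eval_def terms_coeffs_def hom_eval_def)
next
  case (Cons x L)
  obtain r a b e where x: "x = (r,(a,b,e))" by (cases x) auto
  have "terms_coeffs (x # L) = (\<lambda>y. (if y = (a,b,e) then r else 0) + terms_coeffs L y)"
    by (auto simp: terms_coeffs_def x fun_eq_iff)
  then show ?case
    using Cons hom_eval_single[of a N b e r v] by (auto simp: x hom_eval_add terms_eval_def)
qed

lemma terms_coeffs_nonzero: "terms_coeffs L x \<noteq> 0 \<Longrightarrow> x \<in> snd ` set L"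
  by (induction L) (auto simp: terms_coeffs_def split: if_splits)

lemma polyfun3_obtains_hom_eval:
  assumes "f \<in> polyfun3"
  obtains N c where "coeffs_in_box N c" "f = hom_eval N c"
proof -
  obtain L where L: "f = terms_eval L" using polyfun3_terms_eval[OF assms] by blast
  define N where "N = Max ((\<lambda>(r,(a,b,e)). a + b + e) ` set L \<union> {0})"
  have bound: "\<forall>(r,(a,b,e))\<in>set L. a \<le> N \<and> b \<le> N \<and> e \<le> N"
  proof clarify
    fix r a b e assume "(r,(a,b,e)) \<in> set L"
    hence "a + b + e \<le> N" unfolding N_def by (intro Max_ge) force+
    thus "a \<le> N \<and> b \<le> N \<and> e \<le> N" by simp
  qed
  have "coeffs_in_box N (terms_coeffs L)"
    unfolding coeffs_in_box_def using bound terms_coeffs_nonzero by fastforce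
  then show ?thesis using that L terms_eval_hom_eval[OF bound] by blast
qed

lemma hom_eval_coeffs_in_box:
  assumes "coeffs_in_box M c" "M \<le> N"
  shows "hom_eval N c = hom_eval M c"
proof
  fix v :: "'a^3"
  define T where "T a b e = c (a, b, e) * (v $ 1) ^ a * (v $ 2) ^ b * (v $ 3) ^ e" for a b e
  have shrink: "(\<Sum>a\<le>N. F a) = (\<Sum>a\<le>M. F a)" if "\<And>a. M < a \<Longrightarrow> F a = 0" for F :: "nat \<Rightarrow> 'a"
    by (rule sum.mono_neutral_right) (use assms(2) that in auto)
  have "T a b e = 0" if "M < a \<or> M < b \<or> M < e" for a b e
    unfolding T_def using coeffs_in_box_outside[OF assms(1) that] by simp
  then have "(\<Sum>a\<le>N. \<Sum>b\<le>N. \<Sum>e\<le>N. T a b e) = (\<Sum>a\<le>M. \<Sum>b\<le>M. \<Sum>e\<le>M. T a b e)"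
    by (simp add: shrink)
  then show "hom_eval N c v = hom_eval M c v" by (simp add: hom_eval_def T_def)
qed

lemma coeffs_zero_if_vanishes_on_infinite:
  fixes f :: "nat \<Rightarrow> 'a::idom"
  assumes "infinite S" and "\<forall>x\<in>S. (\<Sum>a\<le>N. f a * x^a) = 0"
  shows "\<forall>a\<le>N. f a = 0"
proof -
  define p where "p = (\<Sum>a\<le>N. monom (f a) a)"
  have "poly p x = (\<Sum>a\<le>N. f a * x^a)" for x
    by (simp add: p_def poly_sum poly_monom)
  then have "S \<subseteq> {x. poly p x = 0}" using assms(2) by auto
  then have "p = 0" using assms(1) poly_roots_finite finite_subset by blast
  then show ?thesis by (metis (no_types) p_def coeff_sum_monom coeff_0)
qed

lemma hom_eval_coeffs_zero_if_vanishes: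
  fixes d :: "nat \<times> nat \<times> nat \<Rightarrow> 'a::field"
  assumes S: "infinite S" and vanish: "\<And>v. (\<forall>i. v $ i \<in> S) \<Longrightarrow> hom_eval N d v = 0"
    and "a \<le> N" "b \<le> N" "e \<le> N"
  shows "d (a,b,e) = 0"
proof -
  have "(\<Sum>a\<le>N. (\<Sum>b\<le>N. (\<Sum>e\<le>N. d (a,b,e) * z^e) * y^b) * x^a) = 0"
    if "x \<in> S" "y \<in> S" "z \<in> S" for x y z
    using vanish[of "vector [x,y,z]"] that
    by (simp add: hom_eval_def forall_3 sum_distrib_left sum_distrib_right mult_ac)
  then have "(\<Sum>b\<le>N. (\<Sum>e\<le>N. d (a,b,e) * z^e) * y^b) = 0" if "y \<in> S" "z \<in> S" for y z
    using coeffs_zero_if_vanishes_on_infinite[OF S, of "\<lambda>a. \<Sum>b\<le>N. (\<Sum>e\<le>N. d (a,b,e) * z^e) * y^b"]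
      \<open>a \<le> N\<close> that by blast
  then have "(\<Sum>e\<le>N. d (a,b,e) * z^e) = 0" if "z \<in> S" for z
    using coeffs_zero_if_vanishes_on_infinite[OF S, of "\<lambda>b. \<Sum>e\<le>N. d (a,b,e) * z^e"]
      \<open>b \<le> N\<close> that by blast
  then show ?thesis
    using coeffs_zero_if_vanishes_on_infinite[OF S, of "\<lambda>e. d (a,b,e)"] \<open>e \<le> N\<close> by blast
qed

lemma hom_eval_cmult: "hom_eval n (\<lambda>x. a * c x) v = a * hom_eval n c v"
  using hom_eval_lin[of n a c 0 c v] by simp

lemma hom_eval_scale:
  "hom_eval N c (t *s v) = hom_eval N (\<lambda>(a,b,e). t^(a+b+e) * c (a,b,e)) v"
  unfolding hom_eval_def
  by (intro sum.cong refl) (auto simp: power_mult_distrib power_add mult_ac)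

lemma hom_eval_scale_homogeneous:
  assumes "\<forall>a b e. a + b + e \<noteq> n \<longrightarrow> c (a,b,e) = 0"
  shows "hom_eval N c (t *s v) = t^n * hom_eval N c v"
proof -
  have "(\<lambda>(a,b,e). t^(a+b+e) * c (a,b,e)) = (\<lambda>x. t^n * c x)"
    using assms by (force simp: fun_eq_iff)
  then show ?thesis by (simp add: hom_eval_scale hom_eval_cmult)
qed

lemma polyfun3_homogeneous_obtains_coeffs:
  fixes f :: "'a::field_char_0^3 \<Rightarrow> 'a"
  assumes "f \<in> polyfun3" and homogeneous: "\<And>t v. f (t *s v) = t^n * f v"
  obtains d where "\<forall>a b e. a + b + e \<noteq> n \<longrightarrow> d (a,b,e) = 0" and "f = hom_eval n d"
proof -
  obtain N0 d where box0: "coeffs_in_box N0 d" and f0: "f = hom_eval N0 d"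
    using polyfun3_obtains_hom_eval[OF assms(1)] by blast
  define N where "N = max N0 n"
  have box: "coeffs_in_box N d" using box0 unfolding coeffs_in_box_def N_def by force
  have f: "f = hom_eval N d" using f0 hom_eval_coeffs_in_box[OF box0, of N] by (simp add: N_def)
  have degree: "d (a,b,e) = 0" if "a + b + e \<noteq> n" for a b e
  proof (cases "a \<le> N \<and> b \<le> N \<and> e \<le> N")
    case False then show ?thesis using coeffs_in_box_outside[OF box] by force
  next
    case True
    text \<open>Comparing \<open>f (2 v)\<close> with \<open>2\<^sup>n f v\<close> separates the degrees.\<close>
    define D where "D = (\<lambda>x. 1 * (case x of (a,b,e) \<Rightarrow> (2::'a)^(a+b+e) * d (a,b,e)) + (- (2^n)) * d x)"
    have "hom_eval N D v = f (2 *s v) - 2^n * f v" for v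
      unfolding D_def hom_eval_lin f hom_eval_scale by simp
    then have "hom_eval N D v = 0" for v by (simp only: homogeneous diff_self)
    then have "D (a,b,e) = 0"
      using hom_eval_coeffs_zero_if_vanishes[OF infinite_UNIV_char_0, of N D] True by blast
    then have "((2::'a)^(a+b+e) - 2^n) * d (a,b,e) = 0" by (simp add: D_def algebra_simps)
    moreover have "(2::'a)^(a+b+e) \<noteq> 2^n"
    proof
      assume "(2::'a)^(a+b+e) = 2^n"
      then have "of_nat (2^(a+b+e)) = (of_nat (2^n) :: 'a)" by simp
      then have "(2::nat)^(a+b+e) = 2^n" using of_nat_eq_iff by blast
      then show False using that by simp
    qed
    ultimately show ?thesis by simp
  qed
  then have "coeffs_in_box n d" unfolding coeffs_in_box_def by force
  then have "f = hom_eval n d" using f hom_eval_coeffs_in_box[of n d N] by (simp add: N_def)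
  with degree that show ?thesis by blast
qed

section \<open>Harmonic polynomials\<close>

lemma Harm_iff:
  fixes f :: "'a::field_char_0^3 \<Rightarrow> 'a"
  shows "f \<in> Harm n \<longleftrightarrow> f \<in> polyfun3 \<and> (\<forall>t v. f (t *s v) = t^n * f v) \<and> (\<forall>u. laplacian f u = 0)"
proof safe
  assume "f \<in> Harm n"
  then obtain c where c: "harm_coeffs n c" "f = hom_eval n c" unfolding Harm_def by blast
  then have degree: "\<forall>a b e. a + b + e \<noteq> n \<longrightarrow> c (a,b,e) = 0"
    and "laplacian_coeffs c = (\<lambda>_. 0)" by (auto simp: harm_coeffs_iff)
  moreover have "coeffs_in_box n c" using degree unfolding coeffs_in_box_def by force
  ultimately show "f \<in> polyfun3" "f (t *s v) = t^n * f v" "laplacian f u = 0" for t v u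
    using c by (simp_all add: hom_eval_polyfun3 hom_eval_scale_homogeneous laplacian_hom_eval)
      (simp add: hom_eval_def)
next
  assume "f \<in> polyfun3" and homogeneous: "\<forall>t v. f (t *s v) = t^n * f v"
    and harmonic: "\<forall>u. laplacian f u = 0"
  then obtain d where degree: "\<forall>a b e. a + b + e \<noteq> n \<longrightarrow> d (a,b,e) = 0" and f: "f = hom_eval n d"
    using polyfun3_homogeneous_obtains_coeffs by metis
  have box: "coeffs_in_box n d" using degree unfolding coeffs_in_box_def by force
  have "laplacian_coeffs d (a,b,e) = 0" for a b e
  proof (cases "a \<le> n \<and> b \<le> n \<and> e \<le> n")
    case True
    have "hom_eval n (laplacian_coeffs d) u = 0" for u
      using harmonic laplacian_hom_eval[OF box] f by simp
    then show ?thesis using hom_eval_coeffs_zero_if_vanishes[OF infinite_UNIV_char_0] True by blast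
  next
    case False then show ?thesis
      unfolding laplacian_coeffs_def using coeffs_in_box_outside[OF box] by auto
  qed
  then show "f \<in> Harm n"
    unfolding Harm_def using degree f by (auto simp: harm_coeffs_iff fun_eq_iff)
qed

lemma Harm_compose_orthogonal:
  fixes A :: "'a::field_char_0^3^3"
  assumes "f \<in> Harm n" "A ** transpose A = mat 1"
  shows "(\<lambda>v. f (A *v v)) \<in> Harm n"
  using assms by (simp add: Harm_iff polyfun3_compose_linear vector_scalar_commute laplacian_compose_orthogonal)

lemma harm_coeffs_lin:
  assumes "harm_coeffs n c" "harm_coeffs n d"
  shows "harm_coeffs n (\<lambda>x. a * c x + b * d x)"
proof -
  have "laplacian_coeffs (\<lambda>x. a * c x + b * d x) = (\<lambda>x. a * laplacian_coeffs c x + b * laplacian_coeffs d x)"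
    by (simp add: laplacian_coeffs_def fun_eq_iff algebra_simps)
  with assms show ?thesis by (simp add: harm_coeffs_iff)
qed

lemma Harm_lin:
  assumes "f \<in> Harm n" "g \<in> Harm n"
  shows "(\<lambda>v. a * f v + b * g v) \<in> Harm n"
proof -
  obtain c d where "harm_coeffs n c" "f = hom_eval n c" "harm_coeffs n d" "g = hom_eval n d"
    using assms unfolding Harm_def by blast
  then show ?thesis unfolding Harm_def
    by (intro CollectI exI[of _ "\<lambda>x. a * c x + b * d x"]) (auto simp: harm_coeffs_lin hom_eval_lin)
qed

lemma Harm_zero: "(\<lambda>v. 0) \<in> Harm n"
  unfolding Harm_def harm_coeffs_def
  by (intro CollectI exI[of _ "\<lambda>x. 0"]) (simp add: hom_eval_def fun_eq_iff)

section \<open>The representation \<open>W\<close>\<close>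

lemma SO3_transpose_mult: "g \<in> SO3 \<Longrightarrow> transpose g ** g = mat 1"
  unfolding SO3_def by blast

lemma SO3_mult_transpose: "g \<in> SO3 \<Longrightarrow> g ** transpose g = mat 1"
  unfolding SO3_def using matrix_left_right_inverse1 by blast

lemma matrix_inv_SO3:
  assumes "g \<in> SO3"
  shows "matrix_inv g = transpose g"
  unfolding matrix_inv_def
proof (rule some_equality)
  fix A' assume "g ** A' = mat 1 \<and> A' ** g = mat 1"
  then have "A' ** g ** transpose g = transpose g" by (simp add: matrix_mul_lid)
  then show "A' = transpose g"
    by (simp add: matrix_mul_assoc[symmetric] SO3_mult_transpose[OF assms] matrix_mul_rid)
qed (simp add: SO3_transpose_mult[OF assms] SO3_mult_transpose[OF assms])

lemma SO3_mult:
  assumes "g \<in> SO3" "h \<in> SO3"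
  shows "g ** h \<in> SO3"
proof -
  have "transpose (g ** h) ** (g ** h) = transpose h ** (transpose g ** g) ** h"
    by (simp add: matrix_transpose_mul matrix_mul_assoc)
  also have "\<dots> = mat 1" using assms by (simp add: SO3_transpose_mult matrix_mul_lid)
  finally show ?thesis using assms unfolding SO3_def by (simp add: det_mul)
qed

lemma SO3_transpose_mult_cancel: "g \<in> SO3 \<Longrightarrow> transpose g ** (g ** h) = h"
  by (simp add: matrix_mul_assoc SO3_transpose_mult matrix_mul_lid)

lemma wact_SO3: "g \<in> SO3 \<Longrightarrow> wact g w = (\<lambda>i v. w i (transpose g *v v))"
  by (simp add: wact_def matrix_inv_SO3)

lemma wact_mult:
  assumes "g \<in> SO3" "h \<in> SO3"
  shows "wact g (wact h w) = wact (g ** h) w"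
proof -
  have "transpose (g ** h) *v v = transpose h *v (transpose g *v v)" for v
    by (simp only: matrix_transpose_mul matrix_vector_mul_assoc)
  then show ?thesis by (simp add: wact_SO3 assms SO3_mult)
qed

lemma wact_lin: "wact g (wadd (wscale a x) (wscale b y)) = wadd (wscale a (wact g x)) (wscale b (wact g y))"
  by (simp add: wact_def wadd_def wscale_def)

lemma Wsp_lin:
  assumes "x \<in> Wsp ns" "y \<in> Wsp ns"
  shows "wadd (wscale a x) (wscale b y) \<in> Wsp ns"
  using assms unfolding Wsp_def wadd_def wscale_def by (auto intro: Harm_lin)

lemma wscale_1 [simp]: "wscale 1 x = x"
  by (simp add: wscale_def)

lemma wadd_wscale_0 [simp]: "wadd x (wscale 0 y) = x"
  by (simp add: wscale_def wadd_def)

lemma Wsp_add: "x \<in> Wsp ns \<Longrightarrow> y \<in> Wsp ns \<Longrightarrow> wadd x y \<in> Wsp ns"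
  using Wsp_lin[of x ns y 1 1] by simp

lemma Wsp_scale: "x \<in> Wsp ns \<Longrightarrow> wscale a x \<in> Wsp ns"
  using Wsp_lin[of x ns x a 0] by simp

lemma Wsp_zero: "(\<lambda>i v. 0) \<in> Wsp ns"
  unfolding Wsp_def using Harm_zero by auto

lemma Wsp_wact:
  fixes g :: "'a::field_char_0^3^3"
  assumes "g \<in> SO3" "w \<in> Wsp ns"
  shows "wact g w \<in> Wsp ns"
  using assms Harm_compose_orthogonal[of _ _ "transpose g"]
  by (auto simp: Wsp_def wact_SO3 SO3_transpose_mult)

lemma lin_on_add:
  "lin_on V wscale wadd l \<Longrightarrow> x \<in> V \<Longrightarrow> y \<in> V \<Longrightarrow> l (wadd x y) = l x + l y"
  unfolding lin_on_def by (metis mult_1 wscale_1)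

lemma lin_on_scale: "lin_on V wscale wadd l \<Longrightarrow> x \<in> V \<Longrightarrow> l (wscale a x) = a * l x"
  unfolding lin_on_def by (metis mult_zero_left add_0_right wadd_wscale_0)

section \<open>Complexification\<close>

definition complex_vec :: "real^3 \<Rightarrow> complex^3" where
  "complex_vec u = (\<chi> j. complex_of_real (u$j))"

definition complex_mat :: "real^3^3 \<Rightarrow> complex^3^3" where
  "complex_mat g = (\<chi> i j. complex_of_real (g$i$j))"

definition Re_W :: "(nat \<Rightarrow> complex^3 \<Rightarrow> complex) \<Rightarrow> nat \<Rightarrow> real^3 \<Rightarrow> real" where
  "Re_W x = (\<lambda>i u. Re (x i (complex_vec u)))"

definition Im_W :: "(nat \<Rightarrow> complex^3 \<Rightarrow> complex) \<Rightarrow> nat \<Rightarrow> real^3 \<Rightarrow> real" where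
  "Im_W x = (\<lambda>i u. Im (x i (complex_vec u)))"

lemma complex_vec_nth [simp]: "complex_vec u $ j = complex_of_real (u$j)"
  by (simp add: complex_vec_def)

lemma complex_mat_nth [simp]: "complex_mat g $ i $ j = complex_of_real (g$i$j)"
  by (simp add: complex_mat_def)

lemma hom_eval_of_real:
  "hom_eval n (\<lambda>x. complex_of_real (c x)) (complex_vec u) = complex_of_real (hom_eval n c u)"
  by (simp add: hom_eval_def)

lemma Re_hom_eval_complex_vec: "Re (hom_eval n c (complex_vec u)) = hom_eval n (\<lambda>x. Re (c x)) u"
  by (simp add: hom_eval_def Re_sum mult.assoc[symmetric] of_real_power[symmetric] of_real_mult[symmetric]
      del: of_real_power of_real_mult)

lemma Im_hom_eval_complex_vec: "Im (hom_eval n c (complex_vec u)) = hom_eval n (\<lambda>x. Im (c x)) u"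
  by (simp add: hom_eval_def Im_sum mult.assoc[symmetric] of_real_power[symmetric] of_real_mult[symmetric]
      del: of_real_power of_real_mult)

lemma harm_coeffs_map:
  fixes \<phi> :: "'a::field \<Rightarrow> 'b::field"
  assumes "harm_coeffs n c"
    and "\<And>x y. \<phi> (x + y) = \<phi> x + \<phi> y" "\<And>k x. \<phi> (of_nat k * x) = of_nat k * \<phi> x" "\<phi> 0 = 0"
  shows "harm_coeffs n (\<lambda>x. \<phi> (c x))"
  using assms(1) unfolding harm_coeffs_def by (metis (no_types, lifting) assms(2-4))

lemma harm_coeffs_of_real: "harm_coeffs n c \<Longrightarrow> harm_coeffs n (\<lambda>x. complex_of_real (c x))"
  by (rule harm_coeffs_map) simp_all

lemma harm_coeffs_Re: "harm_coeffs n c \<Longrightarrow> harm_coeffs n (\<lambda>x. Re (c x))"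
  by (rule harm_coeffs_map) simp_all

lemma harm_coeffs_Im: "harm_coeffs n c \<Longrightarrow> harm_coeffs n (\<lambda>x. Im (c x))"
  by (rule harm_coeffs_map) simp_all

lemma infinite_Reals_complex: "infinite (\<real> :: complex set)"
  using finite_imageD[OF _ inj_of_real] infinite_UNIV_char_0 unfolding Reals_def by blast

lemma Harm_eq_if_eq_on_reals:
  assumes "f \<in> Harm n" "g \<in> Harm n" and eq: "\<And>u. f (complex_vec u) = g (complex_vec u)"
  shows "f = g"
proof -
  obtain c1 c2 where c: "f = hom_eval n c1" "g = hom_eval n c2"
    using assms(1,2) unfolding Harm_def by blast
  define d where "d = (\<lambda>x. 1 * c1 x + (-1) * c2 x)"
  have diff: "hom_eval n d v = f v - g v" for v unfolding d_def hom_eval_lin c by simp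
  have "hom_eval n d v = 0" if "\<forall>i. v $ i \<in> \<real>" for v
  proof -
    have "v = complex_vec (\<chi> j. Re (v$j))" using that by (simp add: vec_eq_iff complex_is_Real_iff)
    then show ?thesis using diff eq by (metis right_minus_eq)
  qed
  then have "hom_eval n d v = 0" for v
    using hom_eval_coeffs_zero_if_vanishes[OF infinite_Reals_complex, of n d] by (simp add: hom_eval_def)
  then show ?thesis using diff by (auto simp: fun_eq_iff)
qed

lemma complexify_H_hom_eval:
  assumes "harm_coeffs n c"
  shows "complexify_H n (hom_eval n c) = hom_eval n (\<lambda>x. complex_of_real (c x))"
  unfolding complexify_H_def
proof (rule the_equality)
  have "hom_eval n (\<lambda>x. complex_of_real (c x)) \<in> Harm n"
    using harm_coeffs_of_real[OF assms] unfolding Harm_def by auto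
  then show "hom_eval n (\<lambda>x. complex_of_real (c x)) \<in> Harm n \<and>
      (\<forall>v. hom_eval n (\<lambda>x. complex_of_real (c x)) (\<chi> j. complex_of_real (v $ j)) = complex_of_real (hom_eval n c v))"
    using hom_eval_of_real[of n c] unfolding complex_vec_def by auto
  then show "h = hom_eval n (\<lambda>x. complex_of_real (c x))"
    if "h \<in> Harm n \<and> (\<forall>v. h (\<chi> j. complex_of_real (v $ j)) = complex_of_real (hom_eval n c v))" for h
    using that Harm_eq_if_eq_on_reals[of h n] hom_eval_of_real[of n c] unfolding complex_vec_def by auto
qed

lemma
  assumes "f \<in> Harm n"
  shows Harm_complexify_H: "complexify_H n f \<in> Harm n"
    and complexify_H_complex_vec: "complexify_H n f (complex_vec u) = complex_of_real (f u)"
proof -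
  obtain c where c: "harm_coeffs n c" "f = hom_eval n c" using assms unfolding Harm_def by blast
  then show "complexify_H n f \<in> Harm n"
    using harm_coeffs_of_real[OF c(1)] by (auto simp: complexify_H_hom_eval Harm_def)
  show "complexify_H n f (complex_vec u) = complex_of_real (f u)"
    using c by (simp add: complexify_H_hom_eval hom_eval_of_real)
qed

lemma complexify_W_Wsp: "w \<in> Wsp ns \<Longrightarrow> complexify_W ns w \<in> Wsp ns"
  unfolding Wsp_def complexify_W_def using Harm_complexify_H by auto

lemma complexify_W_complex_vec:
  "w \<in> Wsp ns \<Longrightarrow> complexify_W ns w i (complex_vec u) = complex_of_real (w i u)"
  unfolding complexify_W_def using complexify_H_complex_vec by (auto simp: Wsp_def)

lemma Re_W_complexify_W: "w \<in> Wsp ns \<Longrightarrow> Re_W (complexify_W ns w) = w"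
  by (simp add: Re_W_def complexify_W_complex_vec)

lemma Im_W_complexify_W: "w \<in> Wsp ns \<Longrightarrow> Im_W (complexify_W ns w) = (\<lambda>i u. 0)"
  by (simp add: Im_W_def complexify_W_complex_vec)

lemma Harm_Re:
  assumes "h \<in> Harm n"
  shows "(\<lambda>u. Re (h (complex_vec u))) \<in> Harm n"
proof -
  obtain c where "harm_coeffs n c" "h = hom_eval n c" using assms unfolding Harm_def by blast
  then show ?thesis unfolding Harm_def
    by (intro CollectI exI[of _ "\<lambda>x. Re (c x)"]) (simp add: Re_hom_eval_complex_vec harm_coeffs_Re)
qed

lemma Harm_Im:
  assumes "h \<in> Harm n"
  shows "(\<lambda>u. Im (h (complex_vec u))) \<in> Harm n"
proof -
  obtain c where "harm_coeffs n c" "h = hom_eval n c" using assms unfolding Harm_def by blast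
  then show ?thesis unfolding Harm_def
    by (intro CollectI exI[of _ "\<lambda>x. Im (c x)"]) (simp add: Im_hom_eval_complex_vec harm_coeffs_Im)
qed

lemma Re_W_Wsp: "x \<in> Wsp ns \<Longrightarrow> Re_W x \<in> Wsp ns"
  by (simp add: Wsp_def Re_W_def Harm_Re)

lemma Im_W_Wsp: "x \<in> Wsp ns \<Longrightarrow> Im_W x \<in> Wsp ns"
  by (simp add: Wsp_def Im_W_def Harm_Im)

lemma Wsp_Re_Im_decomposition:
  assumes x: "x \<in> Wsp ns"
  shows "x = wadd (complexify_W ns (Re_W x)) (wscale \<i> (complexify_W ns (Im_W x)))"
proof (intro ext)
  fix i v
  show "x i v = wadd (complexify_W ns (Re_W x)) (wscale \<i> (complexify_W ns (Im_W x))) i v"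
  proof (cases "i < length ns")
    case True
    then obtain c where c: "harm_coeffs (ns!i) c" "x i = hom_eval (ns!i) c"
      using x unfolding Wsp_def Harm_def by blast
    have "complexify_W ns (Re_W x) i = hom_eval (ns!i) (\<lambda>x. complex_of_real (Re (c x)))"
      "complexify_W ns (Im_W x) i = hom_eval (ns!i) (\<lambda>x. complex_of_real (Im (c x)))"
      using True c
      by (simp_all add: complexify_W_def Re_W_def Im_W_def Re_hom_eval_complex_vec Im_hom_eval_complex_vec
          complexify_H_hom_eval harm_coeffs_Re harm_coeffs_Im)
    moreover have "hom_eval (ns!i) c v
        = hom_eval (ns!i) (\<lambda>z. 1 * complex_of_real (Re (c z)) + \<i> * complex_of_real (Im (c z))) v"
      by (simp add: complex_eq[symmetric])
    ultimately show ?thesis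
      using c hom_eval_lin[of "ns!i" 1 "\<lambda>z. complex_of_real (Re (c z))" \<i> "\<lambda>z. complex_of_real (Im (c z))" v]
      by (simp add: wadd_def wscale_def)
  next
    case False then show ?thesis
      using x unfolding Wsp_def wadd_def wscale_def complexify_W_def by auto
  qed
qed

lemma complexify_W_lin:
  assumes x: "x \<in> Wsp ns" and y: "y \<in> Wsp ns"
  shows "complexify_W ns (wadd (wscale a x) (wscale b y))
       = wadd (wscale (complex_of_real a) (complexify_W ns x)) (wscale (complex_of_real b) (complexify_W ns y))"
proof (intro ext)
  fix i v
  show "complexify_W ns (wadd (wscale a x) (wscale b y)) i v
       = wadd (wscale (complex_of_real a) (complexify_W ns x)) (wscale (complex_of_real b) (complexify_W ns y)) i v"
  proof (cases "i < length ns")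
    case True
    then obtain c d where c: "harm_coeffs (ns!i) c" "x i = hom_eval (ns!i) c"
      and d: "harm_coeffs (ns!i) d" "y i = hom_eval (ns!i) d"
      using x y unfolding Wsp_def Harm_def by blast
    have "wadd (wscale a x) (wscale b y) i = hom_eval (ns!i) (\<lambda>z. a * c z + b * d z)"
      using c d by (simp add: wadd_def wscale_def hom_eval_lin fun_eq_iff)
    moreover have "hom_eval (ns!i) (\<lambda>z. complex_of_real (a * c z + b * d z)) v
        = complex_of_real a * hom_eval (ns!i) (\<lambda>z. complex_of_real (c z)) v
          + complex_of_real b * hom_eval (ns!i) (\<lambda>z. complex_of_real (d z)) v"
      by (simp add: hom_eval_lin[symmetric])
    ultimately show ?thesis
      using True c d by (simp add: complexify_W_def wadd_def wscale_def complexify_H_hom_eval harm_coeffs_lin)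
  next
    case False then show ?thesis unfolding complexify_W_def wadd_def wscale_def by simp
  qed
qed

lemma complex_mat_mult: "complex_mat g ** complex_mat h = complex_mat (g ** h)"
  by (simp add: vec_eq_iff matrix_matrix_mult_def complex_mat_def)

lemma complex_mat_transpose: "transpose (complex_mat g) = complex_mat (transpose g)"
  by (simp add: vec_eq_iff transpose_def complex_mat_def)

lemma complex_mat_SO3: "g \<in> SO3 \<Longrightarrow> complex_mat g \<in> SO3"
proof -
  have "complex_mat (mat 1) = mat 1" by (simp add: vec_eq_iff mat_def complex_mat_def)
  moreover have "det (complex_mat g) = complex_of_real (det g)" by (simp add: det_3)
  ultimately show "g \<in> SO3 \<Longrightarrow> complex_mat g \<in> SO3"
    unfolding SO3_def by (simp add: complex_mat_transpose complex_mat_mult)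
qed

lemma complex_mat_mult_complex_vec: "complex_mat g *v complex_vec u = complex_vec (g *v u)"
  by (simp add: vec_eq_iff matrix_vector_mult_def)

lemma complexify_W_wact:
  assumes g: "g \<in> SO3" and w: "w \<in> Wsp ns"
  shows "complexify_W ns (wact g w) = wact (complex_mat g) (complexify_W ns w)"
proof (rule ext)
  fix i
  show "complexify_W ns (wact g w) i = wact (complex_mat g) (complexify_W ns w) i"
  proof (cases "i < length ns")
    case True
    have f: "w i \<in> Harm (ns!i)" using w True unfolding Wsp_def by auto
    have gC: "complex_mat g \<in> SO3" by (rule complex_mat_SO3[OF g])
    have orth: "transpose g ** transpose (transpose g) = mat 1"
      "transpose (complex_mat g) ** transpose (transpose (complex_mat g)) = mat 1"
      using SO3_transpose_mult[OF g] SO3_transpose_mult[OF gC] by simp_all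
    have rotated: "(\<lambda>v. w i (transpose g *v v)) \<in> Harm (ns!i)"
      by (rule Harm_compose_orthogonal[OF f orth(1)])
    have "complexify_H (ns!i) (\<lambda>v. w i (transpose g *v v))
        = (\<lambda>v. complexify_H (ns!i) (w i) (transpose (complex_mat g) *v v))"
    proof (rule Harm_eq_if_eq_on_reals)
      show "complexify_H (ns!i) (\<lambda>v. w i (transpose g *v v)) \<in> Harm (ns!i)"
        by (rule Harm_complexify_H[OF rotated])
      show "(\<lambda>v. complexify_H (ns!i) (w i) (transpose (complex_mat g) *v v)) \<in> Harm (ns!i)"
        by (rule Harm_compose_orthogonal[OF Harm_complexify_H[OF f] orth(2)])
      show "complexify_H (ns!i) (\<lambda>v. w i (transpose g *v v)) (complex_vec u)
          = complexify_H (ns!i) (w i) (transpose (complex_mat g) *v complex_vec u)" for u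
        unfolding complex_mat_transpose complex_mat_mult_complex_vec complexify_H_complex_vec[OF rotated]
          complexify_H_complex_vec[OF f] ..
    qed
    then show ?thesis using True by (simp add: complexify_W_def wact_SO3 g gC)
  next
    case False then show ?thesis by (simp add: complexify_W_def wact_def)
  qed
qed

section \<open>Polynomial functions on \<open>W\<close>\<close>

abbreviation polyfun_W :: "nat list \<Rightarrow> ((nat \<Rightarrow> 'a::field^3 \<Rightarrow> 'a) \<Rightarrow> 'a) set" where
  "polyfun_W ns \<equiv> polyfuns (Wsp ns) wscale wadd"

lemma polyfuns_diff:
  assumes "f \<in> polyfuns V sc ad" "g \<in> polyfuns V sc ad"
  shows "(\<lambda>x. f x - g x) \<in> polyfuns V sc ad"
  using polyfuns.pf_add[OF assms(1) polyfuns.pf_mult[OF polyfuns.pf_const[of "-1"] assms(2)]] by simp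

lemma alg_gen_diff:
  assumes "f \<in> alg_gen S" "g \<in> alg_gen S"
  shows "(\<lambda>x. f x - g x) \<in> alg_gen S"
  using alg_gen.ag_add[OF assms(1) alg_gen.ag_mult[OF alg_gen.ag_const[of "-1"] assms(2)]] by simp

lemma in_on_polyfuns_alg_gen:
  assumes "f \<in> alg_gen S" "\<forall>g\<in>S. in_on V g (polyfuns V sc ad)"
  shows "in_on V f (polyfuns V sc ad)"
  using assms(1)
proof (induction rule: alg_gen.induct)
  case (ag_const c) show ?case unfolding in_on_def by (intro bexI[of _ "\<lambda>_. c"] polyfuns.pf_const) simp
next
  case (ag_gen f) then show ?case using assms(2) by blast
next
  case (ag_add f g) then show ?case unfolding in_on_def by (metis (no_types, lifting) polyfuns.pf_add)
next
  case (ag_mult f g) then show ?case unfolding in_on_def by (metis (no_types, lifting) polyfuns.pf_mult)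
qed

lemma polyfun_W_on_line:
  fixes G :: "(nat \<Rightarrow> 'a::field_char_0^3 \<Rightarrow> 'a) \<Rightarrow> 'a"
  assumes "G \<in> polyfun_W ns" and x: "x \<in> Wsp ns" and y: "y \<in> Wsp ns"
  shows "\<exists>p. \<forall>t. G (wadd x (wscale t y)) = poly p t"
  using assms(1)
proof (induction rule: polyfuns.induct)
  case (pf_const c) show ?case by (rule exI[of _ "[:c:]"]) simp
next
  case (pf_lin l)
  then have "l (wadd (wscale 1 x) (wscale t y)) = 1 * l x + t * l y" for t
    using x y unfolding lin_on_def by blast
  then have "l (wadd x (wscale t y)) = poly [:l x, l y:] t" for t by simp
  then show ?case by blast
next
  case (pf_add f g) then show ?case by (metis poly_add)
next
  case (pf_mult f g) then show ?case by (metis poly_mult)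
qed

text \<open>Along the complex line through \<open>Re x\<close> in direction \<open>Im x\<close>, \<open>H\<close> is a polynomial with
  infinitely many real roots.\<close>

lemma polyfun_W_vanishing_on_real:
  assumes H: "H \<in> polyfun_W ns" and vanish: "\<forall>w\<in>Wsp ns. H (complexify_W ns w) = 0"
    and x: "x \<in> Wsp ns"
  shows "H x = 0"
proof -
  define a where "a = complexify_W ns (Re_W x)"
  define b where "b = complexify_W ns (Im_W x)"
  have re: "Re_W x \<in> Wsp ns" and im: "Im_W x \<in> Wsp ns" using Re_W_Wsp[OF x] Im_W_Wsp[OF x] .
  obtain p where p: "\<forall>t. H (wadd a (wscale t b)) = poly p t"
    using polyfun_W_on_line[OF H] complexify_W_Wsp re im unfolding a_def b_def by blast
  have "poly p (complex_of_real r) = 0" for r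
  proof -
    have "wadd a (wscale (complex_of_real r) b) = complexify_W ns (wadd (wscale 1 (Re_W x)) (wscale r (Im_W x)))"
      unfolding complexify_W_lin[OF re im] a_def b_def by simp
    then show ?thesis using p vanish Wsp_lin[OF re im] by metis
  qed
  then have "\<real> \<subseteq> {z. poly p z = 0}" by (auto elim: Reals_cases)
  then have "p = 0" using infinite_Reals_complex poly_roots_finite finite_subset by blast
  moreover have "x = wadd a (wscale \<i> b)" unfolding a_def b_def by (rule Wsp_Re_Im_decomposition[OF x])
  ultimately show "H x = 0" using p by simp
qed

lemma polyfun_W_compose_linear:
  assumes "G \<in> polyfun_W ns"
    and maps: "\<And>x. x \<in> Wsp ns \<Longrightarrow> T x \<in> Wsp ns"
    and linear: "\<And>x y a b. x \<in> Wsp ns \<Longrightarrow> y \<in> Wsp ns \<Longrightarrow>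
       T (wadd (wscale a x) (wscale b y)) = wadd (wscale a (T x)) (wscale b (T y))"
  shows "(\<lambda>x. G (T x)) \<in> polyfun_W ns"
  using assms(1)
proof (induction rule: polyfuns.induct)
  case (pf_lin l)
  then have "lin_on (Wsp ns) wscale wadd (\<lambda>x. l (T x))"
    using maps linear unfolding lin_on_def by simp
  then show ?case by (rule polyfuns.pf_lin)
qed (auto intro: polyfuns.intros)

lemma Re_W_lin: "Re_W (wadd (wscale a x) (wscale b y)) =
  wadd (wadd (wscale (Re a) (Re_W x)) (wscale (- Im a) (Im_W x)))
       (wadd (wscale (Re b) (Re_W y)) (wscale (- Im b) (Im_W y)))"
  by (simp add: Re_W_def Im_W_def wadd_def wscale_def fun_eq_iff)

lemma Im_W_lin: "Im_W (wadd (wscale a x) (wscale b y)) =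
  wadd (wadd (wscale (Re a) (Im_W x)) (wscale (Im a) (Re_W x)))
       (wadd (wscale (Re b) (Im_W y)) (wscale (Im b) (Re_W y)))"
  by (simp add: Re_W_def Im_W_def wadd_def wscale_def fun_eq_iff algebra_simps)

lemma lin_on_Wsp_combination:
  assumes l: "lin_on (Wsp ns) wscale wadd l" and "p \<in> Wsp ns" "q \<in> Wsp ns" "r \<in> Wsp ns" "s \<in> Wsp ns"
  shows "l (wadd (wadd (wscale a p) (wscale b q)) (wadd (wscale c r) (wscale d s)))
       = a * l p + b * l q + c * l r + d * l s"
  using assms by (simp add: Wsp_add Wsp_scale lin_on_add[OF l] lin_on_scale[OF l] algebra_simps)

lemma lin_on_complex_extension:
  fixes l :: "(nat \<Rightarrow> real^3 \<Rightarrow> real) \<Rightarrow> real"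
  assumes l: "lin_on (Wsp ns) wscale wadd l"
  shows "lin_on (Wsp ns) wscale wadd (\<lambda>x. complex_of_real (l (Re_W x)) + \<i> * complex_of_real (l (Im_W x)))"
  unfolding lin_on_def
proof (intro ballI allI)
  fix x y :: "nat \<Rightarrow> complex^3 \<Rightarrow> complex" and a b :: complex
  assume "x \<in> Wsp ns" "y \<in> Wsp ns"
  then have parts: "Re_W x \<in> Wsp ns" "Im_W x \<in> Wsp ns" "Re_W y \<in> Wsp ns" "Im_W y \<in> Wsp ns"
    using Re_W_Wsp Im_W_Wsp by auto
  show "complex_of_real (l (Re_W (wadd (wscale a x) (wscale b y))))
        + \<i> * complex_of_real (l (Im_W (wadd (wscale a x) (wscale b y))))
      = a * (complex_of_real (l (Re_W x)) + \<i> * complex_of_real (l (Im_W x)))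
        + b * (complex_of_real (l (Re_W y)) + \<i> * complex_of_real (l (Im_W y)))"
    unfolding Re_W_lin Im_W_lin lin_on_Wsp_combination[OF l parts]
      lin_on_Wsp_combination[OF l parts(2,1,4,3)]
    by (simp add: complex_eq_iff algebra_simps)
qed

lemma polyfun_W_complex_extension:
  fixes G :: "(nat \<Rightarrow> real^3 \<Rightarrow> real) \<Rightarrow> real"
  assumes "G \<in> polyfun_W ns"
  shows "\<exists>H \<in> polyfun_W ns. \<forall>w\<in>Wsp ns. H (complexify_W ns w) = complex_of_real (G w)"
  using assms
proof (induction rule: polyfuns.induct)
  case (pf_const c) show ?case by (intro bexI[of _ "\<lambda>_. complex_of_real c"] polyfuns.pf_const) simp
next
  case (pf_lin l)
  have "l (Im_W (complexify_W ns w)) = 0" if "w \<in> Wsp ns" for w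
    using lin_on_scale[OF pf_lin that, of 0] Im_W_complexify_W[OF that] by (simp add: wscale_def)
  then show ?case
    using lin_on_complex_extension[OF pf_lin] Re_W_complexify_W
    by (intro bexI[OF _ polyfuns.pf_lin]) auto
next
  case (pf_add f g)
  then obtain F G where "F \<in> polyfun_W ns" "\<forall>w\<in>Wsp ns. F (complexify_W ns w) = complex_of_real (f w)"
    "G \<in> polyfun_W ns" "\<forall>w\<in>Wsp ns. G (complexify_W ns w) = complex_of_real (g w)" by blast
  then show ?case by (intro bexI[of _ "\<lambda>x. F x + G x"] polyfuns.pf_add) auto
next
  case (pf_mult f g)
  then obtain F G where "F \<in> polyfun_W ns" "\<forall>w\<in>Wsp ns. F (complexify_W ns w) = complex_of_real (f w)"
    "G \<in> polyfun_W ns" "\<forall>w\<in>Wsp ns. G (complexify_W ns w) = complex_of_real (g w)" by blast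
  then show ?case by (intro bexI[of _ "\<lambda>x. F x * G x"] polyfuns.pf_mult) auto
qed

lemma polyfun_W_invariant_complex_mat:
  assumes H: "H \<in> polyfun_W ns"
    and invariant: "\<And>g w. g \<in> SO3 \<Longrightarrow> w \<in> Wsp ns \<Longrightarrow>
       H (complexify_W ns (wact g w)) = H (complexify_W ns w)"
    and g: "g \<in> SO3" and x: "x \<in> Wsp ns"
  shows "H (wact (complex_mat g) x) = H x"
proof -
  have gC: "complex_mat g \<in> SO3" by (rule complex_mat_SO3[OF g])
  have "(\<lambda>x. H (wact (complex_mat g) x)) \<in> polyfun_W ns"
    by (rule polyfun_W_compose_linear[OF H]) (auto intro: Wsp_wact[OF gC] simp: wact_lin)
  then have "(\<lambda>x. H (wact (complex_mat g) x) - H x) \<in> polyfun_W ns" using polyfuns_diff H by blast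
  moreover have "\<forall>w\<in>Wsp ns. H (wact (complex_mat g) (complexify_W ns w)) - H (complexify_W ns w) = 0"
    using invariant[OF g] complexify_W_wact[OF g] by simp
  ultimately show ?thesis using polyfun_W_vanishing_on_real x by fastforce
qed

section \<open>Invariance under \<open>SO(3,\<complex>)\<close>\<close>

definition lagrange_basis :: "(nat \<Rightarrow> 'a::field) \<Rightarrow> nat \<Rightarrow> nat \<Rightarrow> 'a poly" where
  "lagrange_basis z m j = smult (1 / (\<Prod>k\<in>{..m}-{j}. z j - z k)) (\<Prod>k\<in>{..m}-{j}. [:- z k, 1:])"

lemma poly_lagrange_basis:
  assumes "inj_on z {..m}" "j \<le> m" "k \<le> m"
  shows "poly (lagrange_basis z m j) (z k) = (if k = j then 1 else 0)"
proof -
  have "(\<Prod>i\<in>{..m}-{j}. z j - z i) \<noteq> 0"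
    using assms by (auto simp: inj_on_def)
  moreover have "(\<Prod>i\<in>{..m}-{j}. z k - z i) = 0" if "k \<noteq> j"
    using assms that by (subst prod_zero_iff) auto
  ultimately show ?thesis by (simp add: lagrange_basis_def poly_prod)
qed

lemma degree_lagrange_basis: "j \<le> m \<Longrightarrow> degree (lagrange_basis z m j) \<le> m"
  unfolding lagrange_basis_def
  by (rule order.trans[OF degree_smult_le], rule order.trans[OF degree_prod_sum_le]) auto

lemma lagrange_interpolation:
  assumes "inj_on z {..m}" "degree q \<le> m"
  shows "q = (\<Sum>j\<le>m. smult (poly q (z j)) (lagrange_basis z m j))"
proof (rule poly_eqI_degree[of "z ` {..m}"])
  have "(\<Sum>j\<le>m. poly q (z j) * poly (lagrange_basis z m j) (z k)) = poly q (z k)" if "k \<le> m" for k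
  proof -
    have "(\<Sum>j\<le>m. poly q (z j) * poly (lagrange_basis z m j) (z k)) = (\<Sum>j\<le>m. if j = k then poly q (z k) else 0)"
      by (rule sum.cong) (auto simp: poly_lagrange_basis[OF assms(1) _ that])
    then show ?thesis using that by simp
  qed
  then show "poly q x = poly (\<Sum>j\<le>m. smult (poly q (z j)) (lagrange_basis z m j)) x" if "x \<in> z ` {..m}" for x
    using that by (auto simp: poly_sum)
  have "card (z ` {..m}) = Suc m" using assms(1) by (simp add: card_image)
  then show "degree q < card (z ` {..m})"
    "degree (\<Sum>j\<le>m. smult (poly q (z j)) (lagrange_basis z m j)) < card (z ` {..m})"
    using assms(2) by (auto intro!: le_imp_less_Suc degree_sum_le
        order.trans[OF degree_smult_le degree_lagrange_basis])
qed

definition laurent_fun :: "('a::field \<Rightarrow> 'a) \<Rightarrow> bool" where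
  "laurent_fun \<phi> \<longleftrightarrow> (\<exists>p K. \<forall>u. u \<noteq> 0 \<longrightarrow> \<phi> u = poly p u / u^K)"

lemma laurent_fun_const: "laurent_fun (\<lambda>_. c)"
  unfolding laurent_fun_def by (rule exI[of _ "[:c:]"], rule exI[of _ 0]) simp

lemma laurent_fun_add:
  assumes "laurent_fun f" "laurent_fun g"
  shows "laurent_fun (\<lambda>u. f u + g u)"
proof -
  obtain p K where f: "\<forall>u. u \<noteq> 0 \<longrightarrow> f u = poly p u / u^K"
    using assms(1) unfolding laurent_fun_def by blast
  obtain q K' where g: "\<forall>u. u \<noteq> 0 \<longrightarrow> g u = poly q u / u^K'"
    using assms(2) unfolding laurent_fun_def by blast
  have "f u + g u = poly (p * monom 1 K' + q * monom 1 K) u / u^(K+K')" if "u \<noteq> 0" for u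
  proof -
    have "f u + g u = (poly p u * u^K' + poly q u * u^K) / (u^K * u^K')"
      using f g that by (simp add: add_frac_eq)
    then show ?thesis by (simp add: poly_monom power_add)
  qed
  then show ?thesis unfolding laurent_fun_def by blast
qed

lemma laurent_fun_mult:
  assumes "laurent_fun f" "laurent_fun g"
  shows "laurent_fun (\<lambda>u. f u * g u)"
proof -
  obtain p K where f: "\<forall>u. u \<noteq> 0 \<longrightarrow> f u = poly p u / u^K"
    using assms(1) unfolding laurent_fun_def by blast
  obtain q K' where g: "\<forall>u. u \<noteq> 0 \<longrightarrow> g u = poly q u / u^K'"
    using assms(2) unfolding laurent_fun_def by blast
  have "f u * g u = poly (p * q) u / u^(K+K')" if "u \<noteq> 0" for u
    using f g that by (simp add: power_add times_divide_times_eq)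
  then show ?thesis unfolding laurent_fun_def by blast
qed

lemma laurent_fun_zero:
  assumes "laurent_fun f" "infinite S" "0 \<notin> S" "\<forall>u\<in>S. f u = 0" "u \<noteq> 0"
  shows "f u = 0"
proof -
  obtain p K where p: "\<forall>u. u \<noteq> 0 \<longrightarrow> f u = poly p u / u^K" using assms(1) unfolding laurent_fun_def by blast
  have "poly p u = 0" if "u \<in> S" for u
  proof -
    have "u \<noteq> 0" using that assms(3) by auto
    moreover have "poly p u / u^K = 0" using p assms(4) that calculation by metis
    ultimately show ?thesis by simp
  qed
  then have "S \<subseteq> {u. poly p u = 0}" by blast
  then have "p = 0" using assms(2) poly_roots_finite finite_subset by blast
  then show ?thesis using p assms(5) by simp
qed

lemma lin_on_Wsp_sum:
  assumes l: "lin_on (Wsp ns) wscale wadd l" and "finite J" and Y: "\<And>j. j \<in> J \<Longrightarrow> Y j \<in> Wsp ns"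
  shows "(\<lambda>i v. \<Sum>j\<in>J. a j * Y j i v) \<in> Wsp ns \<and> l (\<lambda>i v. \<Sum>j\<in>J. a j * Y j i v) = (\<Sum>j\<in>J. a j * l (Y j))"
  using assms(2,3)
proof (induction J rule: finite_induct)
  case empty
  have "l (\<lambda>i v. 0) = 0" using lin_on_scale[OF l Wsp_zero, of 0] by (simp add: wscale_def)
  then show ?case using Wsp_zero by simp
next
  case (insert x F)
  have split: "(\<lambda>i v. \<Sum>j\<in>insert x F. a j * Y j i v) = wadd (wscale (a x) (Y x)) (\<lambda>i v. \<Sum>j\<in>F. a j * Y j i v)"
    using insert by (simp add: wadd_def wscale_def)
  have Yx: "Y x \<in> Wsp ns" and rest: "(\<lambda>i v. \<Sum>j\<in>F. a j * Y j i v) \<in> Wsp ns" using insert by auto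
  show ?case
    unfolding split using insert lin_on_add[OF l Wsp_scale[OF Yx] rest] lin_on_scale[OF l Yx]
    by (auto intro: Wsp_add Wsp_scale)
qed

text \<open>By Lagrange interpolation \<open>X u\<close> is a combination of the fixed points \<open>X 1, \<dots>, X (2D+1)\<close>
  with Laurent coefficients, so linear, hence all polynomial, functions are Laurent along \<open>X\<close>.\<close>

lemma polyfun_W_laurent_curve:
  fixes X :: "'a::field_char_0 \<Rightarrow> nat \<Rightarrow> 'a^3 \<Rightarrow> 'a"
  assumes H: "H \<in> polyfun_W ns"
    and X: "\<And>u. u \<noteq> 0 \<Longrightarrow> X u \<in> Wsp ns"
    and coords: "\<And>i v. \<exists>q. degree q \<le> 2*D \<and> (\<forall>u. u \<noteq> 0 \<longrightarrow> X u i v = poly q u / u^D)"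
  shows "laurent_fun (\<lambda>u. H (X u))"
proof -
  define m where "m = 2*D"
  define z :: "nat \<Rightarrow> 'a" where "z j = of_nat (Suc j)" for j
  have z: "inj_on z {..m}" "z j \<noteq> 0" for j by (auto simp: z_def inj_on_def simp del: of_nat_Suc)
  define Y where "Y j = X (z j)" for j
  have Y: "Y j \<in> Wsp ns" for j unfolding Y_def by (rule X[OF z(2)])
  define a where "a u j = poly (lagrange_basis z m j) u * z j ^ D / u ^ D" for u j
  have X_interpolated: "X u = (\<lambda>i v. \<Sum>j\<le>m. a u j * Y j i v)" if "u \<noteq> 0" for u
  proof (intro ext)
    fix i v
    obtain q where q: "degree q \<le> m" "\<forall>u. u \<noteq> 0 \<longrightarrow> X u i v = poly q u / u^D"
      using coords[of i v] m_def by blast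
    have "poly q (z j) = z j ^ D * Y j i v" for j
      using q(2) z(2)[of j] by (simp add: Y_def)
    moreover have "poly q u = (\<Sum>j\<le>m. poly q (z j) * poly (lagrange_basis z m j) u)"
      by (subst lagrange_interpolation[OF z(1) q(1)]) (simp add: poly_sum)
    ultimately show "X u i v = (\<Sum>j\<le>m. a u j * Y j i v)"
      using q(2) that by (simp add: a_def sum_divide_distrib mult_ac)
  qed
  show ?thesis using H
  proof (induction rule: polyfuns.induct)
    case (pf_const c) show ?case by (rule laurent_fun_const)
  next
    case (pf_lin l)
    have "l (X u) = poly (\<Sum>j\<le>m. smult (z j ^ D * l (Y j)) (lagrange_basis z m j)) u / u^D" if "u \<noteq> 0" for u
    proof -
      have "l (X u) = (\<Sum>j\<le>m. a u j * l (Y j))"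
        unfolding X_interpolated[OF that] using lin_on_Wsp_sum[OF pf_lin, of "{..m}" Y] Y by blast
      then show ?thesis by (simp add: a_def poly_sum sum_divide_distrib mult_ac)
    qed
    then show ?case unfolding laurent_fun_def by blast
  next
    case (pf_add f g) from pf_add.IH show ?case by (rule laurent_fun_add)
  next
    case (pf_mult f g) from pf_mult.IH show ?case by (rule laurent_fun_mult)
  qed
qed

definition quadratic_laurent :: "('a::field \<Rightarrow> 'a) \<Rightarrow> bool" where
  "quadratic_laurent \<phi> \<longleftrightarrow> (\<exists>p. degree p \<le> 2 \<and> (\<forall>u. u \<noteq> 0 \<longrightarrow> \<phi> u = poly p u / u))"

lemma hom_eval_laurent:
  assumes degree: "\<forall>a b e. a + b + e \<noteq> n \<longrightarrow> c (a,b,e) = 0" and "u \<noteq> 0"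
  shows "hom_eval n c (\<chi> k. poly (Q k) u / u) =
     poly (\<Sum>a\<le>n. \<Sum>b\<le>n. \<Sum>e\<le>n. smult (c (a,b,e)) (Q 1 ^ a * Q 2 ^ b * Q 3 ^ e)) u / u^n"
  unfolding hom_eval_def poly_sum sum_divide_distrib
proof (intro sum.cong refl)
  fix a b e
  show "c (a, b, e) * (\<chi> k. poly (Q k) u / u) $ 1 ^ a * (\<chi> k. poly (Q k) u / u) $ 2 ^ b
      * (\<chi> k. poly (Q k) u / u) $ 3 ^ e = poly (smult (c (a, b, e)) (Q 1 ^ a * Q 2 ^ b * Q 3 ^ e)) u / u ^ n"
  proof (cases "a + b + e = n")
    case True then show ?thesis using \<open>u \<noteq> 0\<close> by (auto simp: power_divide power_add)
  qed (simp add: degree)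
qed

lemma degree_monomial_le:
  fixes Q :: "3 \<Rightarrow> 'a::field poly"
  assumes "\<And>k. degree (Q k) \<le> 2"
  shows "degree (Q 1 ^ a * Q 2 ^ b * Q 3 ^ e) \<le> 2 * (a + b + e)"
proof -
  have "degree (Q 1 ^ a * Q 2 ^ b * Q 3 ^ e) \<le> degree (Q 1 ^ a) + degree (Q 2 ^ b) + degree (Q 3 ^ e)"
    by (meson add_mono_thms_linordered_semiring(3) degree_mult_le order.trans)
  also have "\<dots> \<le> a * 2 + b * 2 + e * 2"
    by (intro add_mono order.trans[OF degree_power_le] mult_left_mono) (auto simp: assms)
  finally show ?thesis by simp
qed

lemma transpose_mult_vec_quadratic_laurent:
  fixes g :: "'a::field \<Rightarrow> 'a^3^3"
  assumes "\<And>i j. quadratic_laurent (\<lambda>u. g u $ i $ j)"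
  obtains Q where "\<And>k. degree (Q k) \<le> 2" "\<And>u. u \<noteq> 0 \<Longrightarrow> transpose (g u) *v v = (\<chi> k. poly (Q k) u / u)"
proof -
  obtain P where P: "\<And>i j. degree (P i j) \<le> 2" "\<And>i j u. u \<noteq> 0 \<Longrightarrow> g u $ i $ j = poly (P i j) u / u"
    using assms unfolding quadratic_laurent_def by metis
  define Q where "Q k = (\<Sum>j\<in>UNIV. smult (v$j) (P j k))" for k
  have "degree (Q k) \<le> 2" for k
    unfolding Q_def by (intro degree_sum_le order.trans[OF degree_smult_le] P) auto
  moreover have "transpose (g u) *v v = (\<chi> k. poly (Q k) u / u)" if "u \<noteq> 0" for u
    by (simp add: vec_eq_iff matrix_vector_mult_def transpose_def Q_def P(2)[OF that] poly_sum
        sum_divide_distrib mult.commute)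
  ultimately show ?thesis using that by blast
qed

lemma hom_eval_laurent_degree:
  fixes Q :: "3 \<Rightarrow> 'a::field poly"
  assumes degree: "\<forall>a b e. a + b + e \<noteq> n \<longrightarrow> c (a,b,e) = 0"
    and Q: "\<And>k. degree (Q k) \<le> 2" and "n \<le> D"
  obtains q where "degree q \<le> 2 * D" "\<And>u. u \<noteq> 0 \<Longrightarrow> hom_eval n c (\<chi> k. poly (Q k) u / u) = poly q u / u^D"
proof -
  define q0 where "q0 = (\<Sum>a\<le>n. \<Sum>b\<le>n. \<Sum>e\<le>n. smult (c (a,b,e)) (Q 1 ^ a * Q 2 ^ b * Q 3 ^ e))"
  have "degree (smult (c (a,b,e)) (Q 1 ^ a * Q 2 ^ b * Q 3 ^ e)) \<le> 2 * n" for a b e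
  proof (cases "a + b + e = n")
    case True
    have "degree (smult (c (a,b,e)) (Q 1 ^ a * Q 2 ^ b * Q 3 ^ e)) \<le> degree (Q 1 ^ a * Q 2 ^ b * Q 3 ^ e)"
      by (rule degree_smult_le)
    also have "\<dots> \<le> 2 * (a + b + e)" by (rule degree_monomial_le) (rule Q)
    finally show ?thesis using True by simp
  next
    case False
    then show ?thesis using degree by simp
  qed
  then have "degree q0 \<le> 2 * n" unfolding q0_def by (intro degree_sum_le) auto
  define q where "q = q0 * monom 1 (D - n)"
  have "degree q \<le> degree q0 + degree (monom (1::'a) (D - n))"
    unfolding q_def by (rule degree_mult_le)
  then have "degree q \<le> 2 * D"
    using \<open>degree q0 \<le> 2 * n\<close> degree_monom_le[of "1::'a" "D - n"] \<open>n \<le> D\<close> by linarith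
  moreover have "hom_eval n c (\<chi> k. poly (Q k) u / u) = poly q u / u^D" if u: "u \<noteq> 0" for u
  proof -
    have "u^D = u^n * u^(D - n)" using \<open>n \<le> D\<close> by (simp add: power_add[symmetric])
    then have "poly q u / u^D = poly q0 u * u^(D - n) / (u^n * u^(D - n))"
      by (simp only: q_def poly_mult poly_monom mult_1)
    also have "\<dots> = poly q0 u / u^n"
      using u by (intro nonzero_mult_divide_mult_cancel_right power_not_zero)
    also have "\<dots> = hom_eval n c (\<chi> k. poly (Q k) u / u)"
      unfolding q0_def by (rule hom_eval_laurent[OF degree u, symmetric])
    finally show ?thesis ..
  qed
  ultimately show ?thesis using that by blast
qed

lemma wact_quadratic_laurent_curve:
  fixes g :: "'a::field_char_0 \<Rightarrow> 'a^3^3"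
  assumes x: "x \<in> Wsp ns" and SO3: "\<And>u. u \<noteq> 0 \<Longrightarrow> g u \<in> SO3"
    and entries: "\<And>i j. quadratic_laurent (\<lambda>u. g u $ i $ j)"
  shows "\<exists>q. degree q \<le> 2 * sum_list ns \<and>
    (\<forall>u. u \<noteq> 0 \<longrightarrow> wact (g u) x i v = poly q u / u ^ sum_list ns)"
proof (cases "i < length ns")
  case False
  then have "x i = (\<lambda>_. 0)" using x unfolding Wsp_def by auto
  then show ?thesis by (intro exI[of _ 0]) (simp add: wact_def)
next
  case True
  then have "ns ! i \<le> sum_list ns" by (simp add: member_le_sum_list)
  obtain c where c: "harm_coeffs (ns ! i) c" "x i = hom_eval (ns ! i) c"
    using x True unfolding Wsp_def Harm_def by blast
  then have "\<forall>a b e. a + b + e \<noteq> ns ! i \<longrightarrow> c (a,b,e) = 0" unfolding harm_coeffs_def by blast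
  moreover obtain Q where "\<And>k. degree (Q k) \<le> 2"
    and Q: "\<And>u. u \<noteq> 0 \<Longrightarrow> transpose (g u) *v v = (\<chi> k. poly (Q k) u / u)"
    using transpose_mult_vec_quadratic_laurent[OF entries] by blast
  ultimately obtain q where "degree q \<le> 2 * sum_list ns"
    and "\<And>u. u \<noteq> 0 \<Longrightarrow> hom_eval (ns ! i) c (\<chi> k. poly (Q k) u / u) = poly q u / u ^ sum_list ns"
    using hom_eval_laurent_degree \<open>ns ! i \<le> sum_list ns\<close> by metis
  then show ?thesis by (metis wact_SO3 SO3 Q c(2))
qed

lemma infinite_unit_circle: "infinite {u::complex. cmod u = 1}"
proof
  assume finite: "finite {u::complex. cmod u = 1}"
  have "{-1..1::real} \<subseteq> Re ` {u. cmod u = 1}"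
  proof
    fix t :: real assume "t \<in> {-1..1}"
    then have "t\<^sup>2 \<le> 1" by (simp add: abs_square_le_1 abs_le_iff)
    then have "cmod (Complex t (sqrt (1 - t\<^sup>2))) = 1" by (simp add: cmod_def)
    then show "t \<in> Re ` {u. cmod u = 1}" by (intro image_eqI[of _ _ "Complex t (sqrt (1 - t\<^sup>2))"]) auto
  qed
  then have "finite {-1..1::real}" using finite_subset finite_imageI[OF finite] by blast
  then show False using infinite_Icc[of "-1::real" 1] by simp
qed

lemma polyfun_W_invariant_along_curve:
  fixes g :: "complex \<Rightarrow> complex^3^3"
  assumes H: "H \<in> polyfun_W ns" and x: "x \<in> Wsp ns"
    and SO3: "\<And>u. u \<noteq> 0 \<Longrightarrow> g u \<in> SO3" and entries: "\<And>i j. quadratic_laurent (\<lambda>u. g u $ i $ j)"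
    and circle: "\<And>u. cmod u = 1 \<Longrightarrow> H (wact (g u) x) = H x"
    and "u \<noteq> 0"
  shows "H (wact (g u) x) = H x"
proof -
  have "laurent_fun (\<lambda>u. H (wact (g u) x))"
    by (rule polyfun_W_laurent_curve[OF H Wsp_wact[OF SO3 x] wact_quadratic_laurent_curve[OF x SO3 entries]])
  then have "laurent_fun (\<lambda>u. H (wact (g u) x) + - H x)" by (rule laurent_fun_add[OF _ laurent_fun_const])
  then have "H (wact (g u) x) + - H x = 0"
    by (rule laurent_fun_zero[where S = "{u. cmod u = 1}"]) (use circle infinite_unit_circle \<open>u \<noteq> 0\<close> in auto)
  then show ?thesis by simp
qed

text \<open>The rational parametrization \<open>u = c + i s\<close> of the complex circle \<open>c\<^sup>2 + s\<^sup>2 = 1\<close>.\<close>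

definition circle_cos :: "complex \<Rightarrow> complex" where
  "circle_cos u = (u\<^sup>2 + 1) / (2 * u)"

definition circle_sin :: "complex \<Rightarrow> complex" where
  "circle_sin u = (u\<^sup>2 - 1) / (2 * \<i> * u)"

lemma circle_cos_sin: "u \<noteq> 0 \<Longrightarrow> (circle_cos u)\<^sup>2 + (circle_sin u)\<^sup>2 = 1"
  by (simp add: circle_cos_def circle_sin_def field_simps power2_eq_square)

lemma circle_cos_sin_inverse:
  assumes "c\<^sup>2 + s\<^sup>2 = (1::complex)"
  shows "c + \<i> * s \<noteq> 0" "circle_cos (c + \<i> * s) = c" "circle_sin (c + \<i> * s) = s"
proof -
  have product: "(c + \<i> * s) * (c - \<i> * s) = 1" using assms by (simp add: algebra_simps power2_eq_square)
  then show nz: "c + \<i> * s \<noteq> 0" by auto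
  have inv: "1 / (c + \<i> * s) = c - \<i> * s" using product nz by (simp add: field_simps)
  have "circle_cos (c + \<i> * s) = ((c + \<i> * s) + 1 / (c + \<i> * s)) / 2"
    unfolding circle_cos_def using nz by (simp add: field_simps power2_eq_square)
  then show "circle_cos (c + \<i> * s) = c" unfolding inv by simp
  have "circle_sin (c + \<i> * s) = ((c + \<i> * s) - 1 / (c + \<i> * s)) / (2 * \<i>)"
    unfolding circle_sin_def using nz by (simp add: field_simps power2_eq_square)
  then show "circle_sin (c + \<i> * s) = s" unfolding inv by (simp add: field_simps)
qed

lemma circle_cos_sin_unit:
  assumes "cmod u = 1"
  shows "circle_cos u = complex_of_real (Re u)" "circle_sin u = complex_of_real (Im u)"
proof -
  have nz: "u \<noteq> 0" using assms by auto
  have "1 / u = cnj u" using assms nz by (simp add: divide_conv_cnj)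
  moreover have "circle_cos u = (u + 1 / u) / 2" "circle_sin u = (u - 1 / u) / (2 * \<i>)"
    unfolding circle_cos_def circle_sin_def using nz by (simp_all add: field_simps power2_eq_square)
  ultimately show "circle_cos u = complex_of_real (Re u)" "circle_sin u = complex_of_real (Im u)"
    using complex_add_cnj[of u] complex_diff_cnj[of u] by (simp_all add: field_simps)
qed

lemma quadratic_laurent_const: "quadratic_laurent (\<lambda>_. c)"
  unfolding quadratic_laurent_def by (intro exI[of _ "[:0, c:]"]) simp

lemma quadratic_laurent_circle_cos: "quadratic_laurent circle_cos"
  unfolding quadratic_laurent_def circle_cos_def
  by (intro exI[of _ "[:1/2, 0, 1/2:]"]) (simp add: field_simps power2_eq_square)

lemma quadratic_laurent_circle_sin: "quadratic_laurent circle_sin"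
  unfolding quadratic_laurent_def circle_sin_def
  by (intro exI[of _ "[:-1/(2*\<i>), 0, 1/(2*\<i>):]"]) (simp add: field_simps power2_eq_square)

lemma quadratic_laurent_uminus: "quadratic_laurent f \<Longrightarrow> quadratic_laurent (\<lambda>u. - f u)"
  unfolding quadratic_laurent_def by (metis degree_minus minus_divide_left poly_minus)

definition rot_z :: "'a::field \<Rightarrow> 'a \<Rightarrow> 'a^3^3" where
  "rot_z c s = vector [vector [c, -s, 0], vector [s, c, 0], vector [0, 0, 1]]"

definition rot_x :: "'a::field \<Rightarrow> 'a \<Rightarrow> 'a^3^3" where
  "rot_x c s = vector [vector [1, 0, 0], vector [0, c, -s], vector [0, s, c]]"

lemma rot_z_nth [simp]:
  "rot_z c s $ 1 $ 1 = c" "rot_z c s $ 1 $ 2 = -s" "rot_z c s $ 1 $ 3 = 0"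
  "rot_z c s $ 2 $ 1 = s" "rot_z c s $ 2 $ 2 = c" "rot_z c s $ 2 $ 3 = 0"
  "rot_z c s $ 3 $ 1 = 0" "rot_z c s $ 3 $ 2 = 0" "rot_z c s $ 3 $ 3 = 1"
  by (simp_all add: rot_z_def)

lemma rot_x_nth [simp]:
  "rot_x c s $ 1 $ 1 = 1" "rot_x c s $ 1 $ 2 = 0" "rot_x c s $ 1 $ 3 = 0"
  "rot_x c s $ 2 $ 1 = 0" "rot_x c s $ 2 $ 2 = c" "rot_x c s $ 2 $ 3 = -s"
  "rot_x c s $ 3 $ 1 = 0" "rot_x c s $ 3 $ 2 = s" "rot_x c s $ 3 $ 3 = c"
  by (simp_all add: rot_x_def)

lemma mat3_eq_iff:
  "(A::'a^3^3) = B \<longleftrightarrow>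
     A$1$1 = B$1$1 \<and> A$1$2 = B$1$2 \<and> A$1$3 = B$1$3 \<and>
     A$2$1 = B$2$1 \<and> A$2$2 = B$2$2 \<and> A$2$3 = B$2$3 \<and>
     A$3$1 = B$3$1 \<and> A$3$2 = B$3$2 \<and> A$3$3 = B$3$3"
  by (simp add: vec_eq_iff forall_3)

lemma matrix_mult_3_nth: "((A::'a::semiring_1^3^3) ** B) $ i $ j = A$i$1 * B$1$j + A$i$2 * B$2$j + A$i$3 * B$3$j"
  by (simp add: matrix_matrix_mult_def sum_3)

lemma rot_z_SO3: "c\<^sup>2 + s\<^sup>2 = 1 \<Longrightarrow> rot_z c s \<in> SO3"
  unfolding SO3_def mat3_eq_iff
  by (simp add: matrix_mult_3_nth transpose_def mat_def det_3 power2_eq_square add.commute)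

lemma rot_x_SO3: "c\<^sup>2 + s\<^sup>2 = 1 \<Longrightarrow> rot_x c s \<in> SO3"
  unfolding SO3_def mat3_eq_iff
  by (simp add: matrix_mult_3_nth transpose_def mat_def det_3 power2_eq_square add.commute)

lemma rot_z_transpose: "transpose (rot_z c s) = rot_z c (-s)"
  unfolding mat3_eq_iff by (simp add: transpose_def)

lemma rot_x_transpose: "transpose (rot_x c s) = rot_x c (-s)"
  unfolding mat3_eq_iff by (simp add: transpose_def)

lemma complex_mat_rot_z: "complex_mat (rot_z a b) = rot_z (complex_of_real a) (complex_of_real b)"
  unfolding mat3_eq_iff by simp

lemma complex_mat_rot_x: "complex_mat (rot_x a b) = rot_x (complex_of_real a) (complex_of_real b)"
  unfolding mat3_eq_iff by simp

text \<open>Along \<open>u \<mapsto> R (circle_cos u) (circle_sin u)\<close> the invariant is a Laurent polynomial in \<open>u\<close>;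
  on the unit circle the rotations are real, so it is constant there and hence everywhere.\<close>

lemma polyfun_W_invariant_rotation_family:
  fixes R :: "complex \<Rightarrow> complex \<Rightarrow> complex^3^3"
  assumes H: "H \<in> polyfun_W ns"
    and real_invariant: "\<And>g x. g \<in> SO3 \<Longrightarrow> x \<in> Wsp ns \<Longrightarrow> H (wact (complex_mat g) x) = H x"
    and R_SO3: "\<And>c s. c\<^sup>2 + s\<^sup>2 = 1 \<Longrightarrow> R c s \<in> SO3"
    and R_real: "\<And>a b. a\<^sup>2 + b\<^sup>2 = 1 \<Longrightarrow> \<exists>g\<in>SO3. R (complex_of_real a) (complex_of_real b) = complex_mat g"
    and R_entries: "\<And>i j. quadratic_laurent (\<lambda>u. R (circle_cos u) (circle_sin u) $ i $ j)"
    and cs: "c\<^sup>2 + s\<^sup>2 = 1" and x: "x \<in> Wsp ns"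
  shows "H (wact (R c s) x) = H x"
proof -
  have "H (wact (R (circle_cos u) (circle_sin u)) x) = H x" if "u \<noteq> 0" for u
  proof (rule polyfun_W_invariant_along_curve[OF H x _ R_entries _ that])
    show "R (circle_cos u) (circle_sin u) \<in> SO3" if "u \<noteq> 0" for u
      using R_SO3 circle_cos_sin that by blast
    show "H (wact (R (circle_cos u) (circle_sin u)) x) = H x" if "cmod u = 1" for u
    proof -
      have "(Re u)\<^sup>2 + (Im u)\<^sup>2 = 1" using that cmod_power2[of u] by simp
      then obtain g where "g \<in> SO3" "R (complex_of_real (Re u)) (complex_of_real (Im u)) = complex_mat g"
        using R_real by blast
      then show ?thesis using real_invariant x circle_cos_sin_unit[OF that] by simp
    qed
  qed
  then show ?thesis using circle_cos_sin_inverse[OF cs] by metis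
qed

lemma polyfun_W_invariant_rot_z:
  assumes "H \<in> polyfun_W ns"
    and "\<And>g x. g \<in> SO3 \<Longrightarrow> x \<in> Wsp ns \<Longrightarrow> H (wact (complex_mat g) x) = H x"
    and "c\<^sup>2 + s\<^sup>2 = 1" "x \<in> Wsp ns"
  shows "H (wact (rot_z c s) x) = H x"
proof (rule polyfun_W_invariant_rotation_family[OF assms(1,2) rot_z_SO3 _ _ assms(3,4)])
  show "\<exists>g\<in>SO3. rot_z (complex_of_real a) (complex_of_real b) = complex_mat g" if "a\<^sup>2 + b\<^sup>2 = 1" for a b
    using rot_z_SO3[OF that] complex_mat_rot_z by metis
  have "\<forall>i j. quadratic_laurent (\<lambda>u. rot_z (circle_cos u) (circle_sin u) $ i $ j)"
    by (simp add: forall_3 quadratic_laurent_const quadratic_laurent_circle_cos quadratic_laurent_circle_sin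
        quadratic_laurent_uminus)
  then show "quadratic_laurent (\<lambda>u. rot_z (circle_cos u) (circle_sin u) $ i $ j)" for i j by blast
qed

lemma polyfun_W_invariant_rot_x:
  assumes "H \<in> polyfun_W ns"
    and "\<And>g x. g \<in> SO3 \<Longrightarrow> x \<in> Wsp ns \<Longrightarrow> H (wact (complex_mat g) x) = H x"
    and "c\<^sup>2 + s\<^sup>2 = 1" "x \<in> Wsp ns"
  shows "H (wact (rot_x c s) x) = H x"
proof (rule polyfun_W_invariant_rotation_family[OF assms(1,2) rot_x_SO3 _ _ assms(3,4)])
  show "\<exists>g\<in>SO3. rot_x (complex_of_real a) (complex_of_real b) = complex_mat g" if "a\<^sup>2 + b\<^sup>2 = 1" for a b
    using rot_x_SO3[OF that] complex_mat_rot_x by metis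
  have "\<forall>i j. quadratic_laurent (\<lambda>u. rot_x (circle_cos u) (circle_sin u) $ i $ j)"
    by (simp add: forall_3 quadratic_laurent_const quadratic_laurent_circle_cos quadratic_laurent_circle_sin
        quadratic_laurent_uminus)
  then show "quadratic_laurent (\<lambda>u. rot_x (circle_cos u) (circle_sin u) $ i $ j)" for i j by blast
qed

lemma SO3_orthonormal_columns:
  "g \<in> SO3 \<Longrightarrow> g$1$i * g$1$j + g$2$i * g$2$j + g$3$i * g$3$j = (if i = j then 1 else 0)"
  using arg_cong[OF SO3_transpose_mult, of g "\<lambda>M. M$i$j"] by (simp add: matrix_mult_3_nth transpose_def mat_def)

lemma SO3_fixing_third_axis:
  fixes k :: "'a::field^3^3"
  assumes k: "k \<in> SO3" and column: "k$1$3 = 0" "k$2$3 = 0" "k$3$3 = 1"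
  shows "k = rot_z (k$1$1) (k$2$1)" "(k$1$1)\<^sup>2 + (k$2$1)\<^sup>2 = 1"
proof -
  have row: "k$3$1 = 0" "k$3$2 = 0"
    using SO3_orthonormal_columns[OF k, of 1 3] SO3_orthonormal_columns[OF k, of 2 3] column by simp_all
  have norm: "k$1$1 * k$1$1 + k$2$1 * k$2$1 = 1" using SO3_orthonormal_columns[OF k, of 1 1] row by simp
  have orth: "k$1$1 * k$1$2 + k$2$1 * k$2$2 = 0" using SO3_orthonormal_columns[OF k, of 1 2] row by simp
  have det: "k$1$1 * k$2$2 - k$1$2 * k$2$1 = 1" using k row column unfolding SO3_def by (simp add: det_3)
  have "k$1$2 = k$1$2 * (k$1$1 * k$1$1 + k$2$1 * k$2$1)" using norm by simp
  also have "\<dots> = k$1$1 * (k$1$1 * k$1$2 + k$2$1 * k$2$2) - k$2$1 * (k$1$1 * k$2$2 - k$1$2 * k$2$1)"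
    by (simp add: algebra_simps)
  finally have k12: "k$1$2 = - k$2$1" using orth det by simp
  have "k$2$2 = k$2$2 * (k$1$1 * k$1$1 + k$2$1 * k$2$1)" using norm by simp
  also have "\<dots> = k$1$1 * (k$1$1 * k$2$2 - k$1$2 * k$2$1) + k$2$1 * (k$1$1 * k$1$2 + k$2$1 * k$2$2)"
    by (simp add: algebra_simps)
  finally have k22: "k$2$2 = k$1$1" using orth det by simp
  show "k = rot_z (k$1$1) (k$2$1)" unfolding mat3_eq_iff using row column k12 k22 by simp
  show "(k$1$1)\<^sup>2 + (k$2$1)\<^sup>2 = 1" using norm by (simp add: power2_eq_square)
qed

lemma rot_x_mult_nth:
  "(rot_x c s ** g) $ 1 $ j = g$1$j" "(rot_x c s ** g) $ 2 $ j = c * g$2$j - s * g$3$j"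
  "(rot_x c s ** g) $ 3 $ j = s * g$2$j + c * g$3$j"
  by (simp_all add: matrix_mult_3_nth)

lemma rot_z_mult_nth:
  "(rot_z c s ** g) $ 1 $ j = c * g$1$j - s * g$2$j" "(rot_z c s ** g) $ 2 $ j = s * g$1$j + c * g$2$j"
  "(rot_z c s ** g) $ 3 $ j = g$3$j"
  by (simp_all add: matrix_mult_3_nth)

text \<open>Over \<open>\<complex>\<close> the third column of a rotation may be isotropic, \<open>g\<^sub>1\<^sub>3\<^sup>2 + g\<^sub>2\<^sub>3\<^sup>2 = 0\<close>; a suitable
  rotation about the \<open>x\<close>-axis removes this degeneracy.\<close>

lemma SO3_rot_x_nonisotropic:
  fixes g :: "complex^3^3"
  assumes "g \<in> SO3"
  obtains c s where "c\<^sup>2 + s\<^sup>2 = 1" "((rot_x c s ** g)$1$3)\<^sup>2 + ((rot_x c s ** g)$2$3)\<^sup>2 \<noteq> 0"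
proof -
  define v1 v2 v3 where "v1 = g$1$3" and "v2 = g$2$3" and "v3 = g$3$3"
  have unit: "v1\<^sup>2 + v2\<^sup>2 + v3\<^sup>2 = 1"
    using SO3_orthonormal_columns[OF assms, of 3 3] unfolding v1_def v2_def v3_def by (simp add: power2_eq_square)
  consider "v1\<^sup>2 + v2\<^sup>2 \<noteq> 0" | "v1\<^sup>2 + v3\<^sup>2 \<noteq> 0" | "v1\<^sup>2 + v2\<^sup>2 = 0" "v1\<^sup>2 + v3\<^sup>2 = 0" by blast
  then show ?thesis
  proof cases
    case 1 then show ?thesis using that[of 1 0] by (simp add: rot_x_mult_nth v1_def v2_def)
  next
    case 2 then show ?thesis using that[of 0 1] by (simp add: rot_x_mult_nth v1_def v3_def)
  next
    case 3
    have v3: "v3\<^sup>2 = 1" using unit 3 by (simp add: algebra_simps)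
    have "v1\<^sup>2 = (v1\<^sup>2 + v3\<^sup>2) - v3\<^sup>2" by simp
    then have v1: "v1\<^sup>2 = -1" using 3(2) v3 by (simp add: eq_neg_iff_add_eq_0)
    have "v2\<^sup>2 = (v1\<^sup>2 + v2\<^sup>2) - v1\<^sup>2" by simp
    then have v2: "v2\<^sup>2 = 1" using 3(1) v1 by simp
    note squares = v3 v1 v2
    have "v1\<^sup>2 + ((3/5) * v2 - (4/5) * v3)\<^sup>2 = 9/25 * v2\<^sup>2 - 24/25 * (v2 * v3) + 16/25 * v3\<^sup>2 + v1\<^sup>2"
      by (simp add: power2_eq_square algebra_simps)
    also have "\<dots> = - (24/25) * (v2 * v3)" unfolding squares by simp
    finally have "v1\<^sup>2 + ((3/5) * v2 - (4/5) * v3)\<^sup>2 \<noteq> 0" using squares by auto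
    moreover have "(3/5::complex)\<^sup>2 + (4/5)\<^sup>2 = 1" by (simp add: power2_eq_square)
    ultimately show ?thesis using that[of "3/5" "4/5"] by (simp add: rot_x_mult_nth v1_def v2_def v3_def)
  qed
qed

lemma SO3_complex_euler:
  fixes g :: "complex^3^3"
  assumes g: "g \<in> SO3"
  obtains c1 s1 c2 s2 c3 s3 c4 s4
  where "c1\<^sup>2 + s1\<^sup>2 = 1" "c2\<^sup>2 + s2\<^sup>2 = 1" "c3\<^sup>2 + s3\<^sup>2 = 1" "c4\<^sup>2 + s4\<^sup>2 = 1"
    and "g = rot_x c1 s1 ** (rot_z c2 s2 ** (rot_x c3 s3 ** rot_z c4 s4))"
proof -
  txt \<open>Move the third column of \<open>g\<close> to \<open>e\<^sub>3\<close>: make it non-isotropic, turn it into the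
    \<open>yz\<close>-plane about the \<open>z\<close>-axis, then onto \<open>e\<^sub>3\<close> about the \<open>x\<close>-axis. What remains fixes \<open>e\<^sub>3\<close>.\<close>
  obtain c0 s0 where cs0: "c0\<^sup>2 + s0\<^sup>2 = 1"
    and nonisotropic: "((rot_x c0 s0 ** g)$1$3)\<^sup>2 + ((rot_x c0 s0 ** g)$2$3)\<^sup>2 \<noteq> 0"
    using SO3_rot_x_nonisotropic[OF g] by blast
  define g1 where "g1 = rot_x c0 s0 ** g"
  have g1: "g1 \<in> SO3" unfolding g1_def by (rule SO3_mult[OF rot_x_SO3[OF cs0] g])
  define w1 w2 w3 where "w1 = g1$1$3" and "w2 = g1$2$3" and "w3 = g1$3$3"
  have unit: "w1\<^sup>2 + w2\<^sup>2 + w3\<^sup>2 = 1"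
    using SO3_orthonormal_columns[OF g1, of 3 3] unfolding w1_def w2_def w3_def by (simp add: power2_eq_square)
  define r where "r = csqrt (w1\<^sup>2 + w2\<^sup>2)"
  have r2: "r\<^sup>2 = w1\<^sup>2 + w2\<^sup>2" unfolding r_def by simp
  have "r \<noteq> 0" using nonisotropic r2 unfolding w1_def w2_def g1_def by auto
  have "(w2/r)\<^sup>2 + (w1/r)\<^sup>2 = (w1\<^sup>2 + w2\<^sup>2) / r\<^sup>2" by (simp add: power_divide add_divide_distrib add.commute)
  moreover have "w1\<^sup>2 + w2\<^sup>2 \<noteq> 0" using r2 \<open>r \<noteq> 0\<close> by (metis power_not_zero)
  ultimately have cs_z: "(w2/r)\<^sup>2 + (w1/r)\<^sup>2 = 1" using r2 by simp
  define g2 where "g2 = rot_z (w2 / r) (w1 / r) ** g1"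
  have g2: "g2 \<in> SO3" unfolding g2_def by (rule SO3_mult[OF rot_z_SO3[OF cs_z] g1])
  have g2_column: "g2$1$3 = 0" "g2$2$3 = r" "g2$3$3 = w3"
    unfolding g2_def using \<open>r \<noteq> 0\<close> r2
    by (simp_all add: rot_z_mult_nth w1_def w2_def w3_def field_simps power2_eq_square)
  have cs_y: "w3\<^sup>2 + r\<^sup>2 = 1" using unit r2 by (simp add: algebra_simps)
  define k where "k = rot_x w3 r ** g2"
  have k: "k \<in> SO3" unfolding k_def by (rule SO3_mult[OF rot_x_SO3[OF cs_y] g2])
  have "k$1$3 = 0" "k$2$3 = 0" "k$3$3 = 1"
    unfolding k_def using g2_column cs_y by (simp_all add: rot_x_mult_nth power2_eq_square algebra_simps)
  note k_rot = SO3_fixing_third_axis[OF k this]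
  have "g = transpose (rot_x c0 s0) ** (transpose (rot_z (w2 / r) (w1 / r)) ** (transpose (rot_x w3 r) ** k))"
    unfolding k_def g2_def g1_def
    by (simp add: SO3_transpose_mult_cancel rot_x_SO3[OF cs0] rot_z_SO3[OF cs_z] rot_x_SO3[OF cs_y])
  then have "g = rot_x c0 (-s0) ** (rot_z (w2 / r) (- (w1 / r)) ** (rot_x w3 (-r) ** rot_z (k$1$1) (k$2$1)))"
    by (simp add: rot_x_transpose rot_z_transpose flip: k_rot(1))
  then show ?thesis
    by (intro that[of c0 "-s0" "w2/r" "-(w1/r)" w3 "-r" "k$1$1" "k$2$1"]) (use cs0 cs_z cs_y k_rot(2) in simp_all)
qed

lemma polyfun_W_invariant_SO3_complex:
  fixes H :: "(nat \<Rightarrow> complex^3 \<Rightarrow> complex) \<Rightarrow> complex"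
  assumes H: "H \<in> polyfun_W ns"
    and real_invariant: "\<And>g x. g \<in> SO3 \<Longrightarrow> x \<in> Wsp ns \<Longrightarrow> H (wact (complex_mat g) x) = H x"
    and g: "g \<in> SO3" and x: "x \<in> Wsp ns"
  shows "H (wact g x) = H x"
proof -
  obtain c1 s1 c2 s2 c3 s3 c4 s4
    where cs: "c1\<^sup>2 + s1\<^sup>2 = 1" "c2\<^sup>2 + s2\<^sup>2 = 1" "c3\<^sup>2 + s3\<^sup>2 = 1" "c4\<^sup>2 + s4\<^sup>2 = 1"
      and g_eq: "g = rot_x c1 s1 ** (rot_z c2 s2 ** (rot_x c3 s3 ** rot_z c4 s4))"
    using SO3_complex_euler[OF g] by blast
  note SO3 = rot_x_SO3[OF cs(1)] rot_z_SO3[OF cs(2)] rot_x_SO3[OF cs(3)] rot_z_SO3[OF cs(4)]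
  have "wact g x = wact (rot_x c1 s1) (wact (rot_z c2 s2) (wact (rot_x c3 s3) (wact (rot_z c4 s4) x)))"
    by (simp add: g_eq wact_mult SO3_mult SO3)
  then show ?thesis
    using x by (simp add: polyfun_W_invariant_rot_x[OF H real_invariant] polyfun_W_invariant_rot_z[OF H real_invariant]
        Wsp_wact SO3 cs)
qed

section \<open>Transfer of integrity bases\<close>

lemma alg_gen_complexify:
  assumes "P \<in> alg_gen (R ` S)"
    and agree: "\<forall>k\<in>S. \<forall>w\<in>Wsp ns. J k (complexify_W ns w) = complex_of_real (R k w)"
  shows "\<exists>Q\<in>alg_gen (J ` S). \<forall>w\<in>Wsp ns. Q (complexify_W ns w) = complex_of_real (P w)"
  using assms(1)
proof (induction rule: alg_gen.induct)
  case (ag_const c) show ?case by (intro bexI[of _ "\<lambda>_. complex_of_real c"] alg_gen.ag_const) simp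
next
  case (ag_gen f)
  then obtain j where "j \<in> S" "f = R j" by blast
  then show ?case using agree by (intro bexI[of _ "J j"] alg_gen.ag_gen) auto
next
  case (ag_add f g)
  then obtain F G where "F \<in> alg_gen (J ` S)" "\<forall>w\<in>Wsp ns. F (complexify_W ns w) = complex_of_real (f w)"
    "G \<in> alg_gen (J ` S)" "\<forall>w\<in>Wsp ns. G (complexify_W ns w) = complex_of_real (g w)" by blast
  then show ?case by (intro bexI[of _ "\<lambda>x. F x + G x"] alg_gen.ag_add) auto
next
  case (ag_mult f g)
  then obtain F G where "F \<in> alg_gen (J ` S)" "\<forall>w\<in>Wsp ns. F (complexify_W ns w) = complex_of_real (f w)"
    "G \<in> alg_gen (J ` S)" "\<forall>w\<in>Wsp ns. G (complexify_W ns w) = complex_of_real (g w)" by blast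
  then show ?case by (intro bexI[of _ "\<lambda>x. F x * G x"] alg_gen.ag_mult) auto
qed

lemma alg_gen_Re_Im:
  assumes "P \<in> alg_gen (J ` S)"
    and agree: "\<forall>k\<in>S. \<forall>w\<in>Wsp ns. J k (complexify_W ns w) = complex_of_real (R k w)"
  shows "\<exists>P1\<in>alg_gen (R ` S). \<exists>P2\<in>alg_gen (R ` S).
    \<forall>w\<in>Wsp ns. P (complexify_W ns w) = Complex (P1 w) (P2 w)"
  using assms(1)
proof (induction rule: alg_gen.induct)
  case (ag_const c)
  show ?case by (intro bexI[of _ "\<lambda>_. Re c"] bexI[of _ "\<lambda>_. Im c"] alg_gen.ag_const) simp
next
  case (ag_gen f)
  then obtain j where "j \<in> S" "f = J j" by blast
  then show ?case
    using agree by (intro bexI[of _ "R j"] bexI[of _ "\<lambda>_. 0"] alg_gen.ag_gen alg_gen.ag_const)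
      (auto simp: complex_of_real_def)
next
  case (ag_add f g)
  then obtain F1 F2 G1 G2 where F: "F1 \<in> alg_gen (R ` S)" "F2 \<in> alg_gen (R ` S)"
    "\<forall>w\<in>Wsp ns. f (complexify_W ns w) = Complex (F1 w) (F2 w)"
    and G: "G1 \<in> alg_gen (R ` S)" "G2 \<in> alg_gen (R ` S)"
    "\<forall>w\<in>Wsp ns. g (complexify_W ns w) = Complex (G1 w) (G2 w)" by blast
  show ?case
    by (rule bexI[of _ "\<lambda>x. F1 x + G1 x"], rule bexI[of _ "\<lambda>x. F2 x + G2 x"])
      (use F G in \<open>auto intro: alg_gen.ag_add simp: complex_eq_iff\<close>)
next
  case (ag_mult f g)
  then obtain F1 F2 G1 G2 where F: "F1 \<in> alg_gen (R ` S)" "F2 \<in> alg_gen (R ` S)"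
    "\<forall>w\<in>Wsp ns. f (complexify_W ns w) = Complex (F1 w) (F2 w)"
    and G: "G1 \<in> alg_gen (R ` S)" "G2 \<in> alg_gen (R ` S)"
    "\<forall>w\<in>Wsp ns. g (complexify_W ns w) = Complex (G1 w) (G2 w)" by blast
  have re: "(\<lambda>x. F1 x * G1 x - F2 x * G2 x) \<in> alg_gen (R ` S)"
    by (intro alg_gen_diff alg_gen.ag_mult F G)
  have im: "(\<lambda>x. F1 x * G2 x + F2 x * G1 x) \<in> alg_gen (R ` S)"
    by (intro alg_gen.ag_add alg_gen.ag_mult F G)
  show ?case
    by (rule bexI[OF _ re], rule bexI[OF _ im]) (use F G in \<open>auto simp: complex_eq_iff\<close>)
qed

lemma inv_W_restriction:
  fixes J :: "(nat \<Rightarrow> complex^3 \<Rightarrow> complex) \<Rightarrow> complex"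
  assumes "inv_W ns J" "poly_W ns R" and agree: "\<forall>w\<in>Wsp ns. J (complexify_W ns w) = complex_of_real (R w)"
  shows "inv_W ns R"
  unfolding inv_W_def
proof (intro conjI ballI)
  fix g :: "real^3^3" and w :: "nat \<Rightarrow> real^3 \<Rightarrow> real" assume g: "g \<in> SO3" and w: "w \<in> Wsp ns"
  have "complex_of_real (R (wact g w)) = J (complexify_W ns (wact g w))"
    using agree Wsp_wact[OF g w] by simp
  also have "\<dots> = J (wact (complex_mat g) (complexify_W ns w))"
    unfolding complexify_W_wact[OF g w] ..
  also have "\<dots> = complex_of_real (R w)"
    using assms(1) complex_mat_SO3[OF g] complexify_W_Wsp[OF w] agree w unfolding inv_W_def by simp
  finally show "R (wact g w) = R w" by simp
qed (rule assms(2))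

lemma homog_W_restriction:
  fixes J :: "(nat \<Rightarrow> complex^3 \<Rightarrow> complex) \<Rightarrow> complex"
  assumes "homog_W ns J" and agree: "\<forall>w\<in>Wsp ns. J (complexify_W ns w) = complex_of_real (R w)"
  shows "homog_W ns R"
proof -
  obtain d where d: "\<forall>t. \<forall>x\<in>Wsp ns. J (wscale t x) = t ^ d * J x"
    using assms(1) unfolding homog_W_def by blast
  have "R (wscale t w) = t ^ d * R w" if w: "w \<in> Wsp ns"
    for t :: real and w :: "nat \<Rightarrow> real^3 \<Rightarrow> real"
  proof -
    have "complex_of_real (R (wscale t w)) = J (complexify_W ns (wscale t w))"
      using agree Wsp_scale[OF w] by simp
    also have "complexify_W ns (wscale t w) = wscale (complex_of_real t) (complexify_W ns w)"
      using complexify_W_lin[OF w w, of t 0] by simp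
    also have "J \<dots> = complex_of_real t ^ d * J (complexify_W ns w)"
      using d complexify_W_Wsp[OF w] by blast
    also have "\<dots> = complex_of_real (t ^ d * R w)" using agree w by simp
    finally show ?thesis by (simp only: of_real_eq_iff)
  qed
  then show ?thesis unfolding homog_W_def by blast
qed

lemma inv_W_complex_extension:
  fixes F :: "(nat \<Rightarrow> real^3 \<Rightarrow> real) \<Rightarrow> real"
  assumes "inv_W ns F"
  obtains H where "inv_W ns H" "\<forall>w\<in>Wsp ns. H (complexify_W ns w) = complex_of_real (F w)"
proof -
  obtain G where G: "G \<in> polyfun_W ns" "\<forall>w\<in>Wsp ns. F w = G w"
    using assms unfolding inv_W_def poly_W_def in_on_def by blast
  obtain H where H: "H \<in> polyfun_W ns" "\<forall>w\<in>Wsp ns. H (complexify_W ns w) = complex_of_real (F w)"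
    using polyfun_W_complex_extension[OF G(1)] G(2) by auto
  have "H (complexify_W ns (wact g w)) = H (complexify_W ns w)" if "g \<in> SO3" "w \<in> Wsp ns"
    for g :: "real^3^3" and w :: "nat \<Rightarrow> real^3 \<Rightarrow> real"
    using H(2) assms Wsp_wact[OF that] that unfolding inv_W_def by simp
  then have "H (wact (complex_mat g) x) = H x" if "g \<in> SO3" "x \<in> Wsp ns" for g :: "real^3^3" and x
    using polyfun_W_invariant_complex_mat[OF H(1)] that by blast
  then have "H (wact g x) = H x" if "g \<in> SO3" "x \<in> Wsp ns" for g :: "complex^3^3" and x
    using polyfun_W_invariant_SO3_complex[OF H(1)] that by blast
  then have "inv_W ns H" unfolding inv_W_def poly_W_def in_on_def using H(1) by blast
  then show ?thesis using that H(2) by blast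
qed

lemma restriction_generates_inv_W:
  fixes J :: "nat \<Rightarrow> (nat \<Rightarrow> complex^3 \<Rightarrow> complex) \<Rightarrow> complex"
  assumes "integrity_basis ns N J"
    and agree: "\<forall>k<N. \<forall>w\<in>Wsp ns. J k (complexify_W ns w) = complex_of_real (R k w)"
    and "inv_W ns F"
  shows "in_on (Wsp ns) F (alg_gen (R ` {..<N}))"
proof -
  obtain H where H: "inv_W ns H" "\<forall>w\<in>Wsp ns. H (complexify_W ns w) = complex_of_real (F w)"
    using inv_W_complex_extension[OF assms(3)] by blast
  then obtain P where P: "P \<in> alg_gen (J ` {..<N})" "\<forall>x\<in>Wsp ns. H x = P x"
    using assms(1) unfolding integrity_basis_def in_on_def by blast
  obtain P1 P2 where "P1 \<in> alg_gen (R ` {..<N})"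
    "\<forall>w\<in>Wsp ns. P (complexify_W ns w) = Complex (P1 w) (P2 w)"
    using alg_gen_Re_Im[OF P(1)] agree by blast
  moreover have "F w = P1 w" if "w \<in> Wsp ns" for w :: "nat \<Rightarrow> real^3 \<Rightarrow> real"
    using H(2) P(2) calculation(2) complexify_W_Wsp that by (metis Re_complex_of_real complex.sel(1))
  ultimately show ?thesis unfolding in_on_def by blast
qed

lemma restriction_not_redundant:
  fixes J :: "nat \<Rightarrow> (nat \<Rightarrow> complex^3 \<Rightarrow> complex) \<Rightarrow> complex"
  assumes "minimal_integrity_basis ns N J"
    and agree: "\<forall>k<N. \<forall>w\<in>Wsp ns. J k (complexify_W ns w) = complex_of_real (R k w)"
    and "k < N"
  shows "\<not> in_on (Wsp ns) (R k) (alg_gen (R ` ({..<N} - {k})))"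
proof
  assume "in_on (Wsp ns) (R k) (alg_gen (R ` ({..<N} - {k})))"
  then obtain P where P: "P \<in> alg_gen (R ` ({..<N} - {k}))" "\<forall>w\<in>Wsp ns. R k w = P w"
    unfolding in_on_def by blast
  obtain Q where Q: "Q \<in> alg_gen (J ` ({..<N} - {k}))"
    "\<forall>w\<in>Wsp ns. Q (complexify_W ns w) = complex_of_real (P w)"
    using alg_gen_complexify[OF P(1)] agree by blast
  have J_poly: "in_on (Wsp ns) (J j) (polyfun_W ns)" if "j < N" for j
    using assms(1) that unfolding minimal_integrity_basis_def integrity_basis_def inv_W_def poly_W_def by blast
  obtain HQ where HQ: "HQ \<in> polyfun_W ns" "\<forall>x\<in>Wsp ns. Q x = HQ x"
    using in_on_polyfuns_alg_gen[OF Q(1)] J_poly unfolding in_on_def by blast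
  obtain HJ where HJ: "HJ \<in> polyfun_W ns" "\<forall>x\<in>Wsp ns. J k x = HJ x"
    using J_poly[OF \<open>k < N\<close>] unfolding in_on_def by blast
  text \<open>\<open>J\<^sub>k\<close> and \<open>Q\<close> agree on \<open>W\<close>, hence on \<open>W\<^sup>\<complex>\<close>, contradicting the minimality of \<open>J\<close>.\<close>
  have "HJ x - HQ x = 0" if "x \<in> Wsp ns" for x
  proof (rule polyfun_W_vanishing_on_real[OF polyfuns_diff[OF HJ(1) HQ(1)] _ that])
    show "\<forall>w\<in>Wsp ns. HJ (complexify_W ns w) - HQ (complexify_W ns w) = 0"
      using HJ(2) HQ(2) Q(2) P(2) agree \<open>k < N\<close> complexify_W_Wsp by fastforce
  qed
  then have "in_on (Wsp ns) (J k) (alg_gen (J ` ({..<N} - {k})))"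
    unfolding in_on_def using Q(1) HJ(2) HQ(2) by (metis eq_iff_diff_eq_0)
  then show False using assms(1) \<open>k < N\<close> unfolding minimal_integrity_basis_def by blast
qed

theorem lemma6p14:
  fixes ns :: "nat list" and N :: nat
    and J :: "nat \<Rightarrow> (nat \<Rightarrow> complex ^ 3 \<Rightarrow> complex) \<Rightarrow> complex"
    and R :: "nat \<Rightarrow> (nat \<Rightarrow> real ^ 3 \<Rightarrow> real) \<Rightarrow> real"
  assumes "minimal_integrity_basis ns N J"
    and "\<forall>k<N. poly_W ns (R k)"
    and "\<forall>k<N. \<forall>w\<in>Wsp ns. J k (complexify_W ns w) = complex_of_real (R k w)"
  shows "minimal_integrity_basis ns N R"
proof -
  have J: "integrity_basis ns N J" "\<forall>k<N. inv_W ns (J k) \<and> homog_W ns (J k)"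
    using assms(1) unfolding minimal_integrity_basis_def integrity_basis_def by blast+
  have "inv_W ns (R k)" "homog_W ns (R k)" if "k < N" for k
    using inv_W_restriction[of ns "J k" "R k"] homog_W_restriction[of ns "J k" "R k"] J(2) assms(2,3) that
    by simp_all
  then show ?thesis
    unfolding minimal_integrity_basis_def integrity_basis_def
    using restriction_generates_inv_W[OF J(1) assms(3)] restriction_not_redundant[OF assms(1,3)] by simp
qed

end
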